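(* Let $A, B$ be $2n\times 2n$ real symmetric positive semidefinite matrices whose kernels are symplectic subspaces of $\mathbb{R}^{2n}$. If $d(A) \prec d(B)$, then there exist real symplectic matrices $M_\pi \in \operatorname{Sp}(2n)$, indexed by $\pi \in S_n$, and a probability vector $(p(\pi))_{\pi\in S_n}$ (non-negative entries summing to $1$) such that $$A = \sum_{\pi \in S_n} p(\pi)\, M_\pi^T B M_\pi .$$ In particular, $A$ lies in the convex hull of the symplectic orbit $\{M^TBM : M \in \operatorname{Sp}(2n)\}$ of $B$.
   Context: Let $J = \begin{bmatrix} 0 & I_n \\ -I_n & 0\end{bmatrix}$. A real $2n\times 2n$ matrix $M$ is symplectic if $M^TJM = J$; $\operatorname{Sp}(2n)$ denotes the group of such matrices. A linear subspace $W\subseteq\mathbb{R}^{2n}$ is symplectic if for every $0\neq u\in W$ there is $v\in W$ with $u^TJv\neq 0$. For a real symmetric positive semidefinite $2n\times 2n$ matrix $A$ whose kernel is a symplectic subspace, there is $M\in\operatorname{Sp}(2n)$ with $M^TAM = D\oplus D$ where $D$ is an $n\times n$ diagonal matrix with non-negative entries, unique up to permutation of its diagonal entries (generalized Williamson theorem); these diagonal entries are the symplectic eigenvalues of $A$, and $d(A) = (d_1(A),\dots,d_n(A))$ denotes them arranged in non-decreasing order. $S_n$ is the symmetric group on $\{1,\dots,n\}$. For $x\in\mathbb{R}^n$, $x^\uparrow$ denotes $x$ with entries rearranged in non-decreasing order. For $x,y\in\mathbb{R}^n$, $x\prec y$ ($x$ is majorized by $y$) means $\sum_{j=1}^k x^\uparrow_j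 \ge \sum_{j=1}^k y^\uparrow_j$ for $1\le k\le n$, with equality for $k=n$. *)

theory Defs
  imports "HOL-Analysis.Analysis" "HOL-Library.Multiset" "HOL-Combinatorics.Permutations"
begin

text \<open>Index set of R^{2n}: the disjoint union 'n + 'n, with n = CARD('n).
  Coordinates Inl i are the first n coordinates, Inr i the last n.\<close>

type_synonym 'n sqmat = "real ^ ('n + 'n) ^ ('n + 'n)"
type_synonym 'n vec2 = "real ^ ('n + 'n)"

definition J_mat :: "('n::finite) sqmat" where
  "J_mat = (\<chi> a b. case (a, b) of
      (Inl i, Inr j) \<Rightarrow> (if i = j then 1 else 0)
    | (Inr i, Inl j) \<Rightarrow> (if i = j then -1 else 0)
    | _ \<Rightarrow> 0)"

definition symplectic :: "('n::finite) sqmat \<Rightarrow> bool" where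
  "symplectic M \<longleftrightarrow> transpose M ** J_mat ** M = J_mat"

definition symplectic_subspace :: "('n::finite) vec2 set \<Rightarrow> bool" where
  "symplectic_subspace W \<longleftrightarrow> subspace W \<and>
     (\<forall>u\<in>W. u \<noteq> 0 \<longrightarrow> (\<exists>v\<in>W. u \<bullet> (J_mat *v v) \<noteq> 0))"

definition psd_sym :: "('n::finite) sqmat \<Rightarrow> bool" where
  "psd_sym A \<longleftrightarrow> transpose A = A \<and> (\<forall>x. 0 \<le> x \<bullet> (A *v x))"

definition kernel_mat :: "('n::finite) sqmat \<Rightarrow> ('n vec2) set" where
  "kernel_mat A = {x. A *v x = 0}"

definition diag2 :: "real ^ ('n::finite) \<Rightarrow> 'n sqmat" where
  "diag2 D = (\<chi> a b. if a = b then (case a of Inl i \<Rightarrow> D $ i | Inr i \<Rightarrow> D $ i) else 0)"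

definition sorted_entries :: "real ^ ('n::finite) \<Rightarrow> real list" where
  "sorted_entries D = sorted_list_of_multiset (image_mset (\<lambda>i. D $ i) (mset_set UNIV))"

text \<open>Symplectic eigenvalues d(A) in non-decreasing order (well defined by the
  generalized Williamson theorem).\<close>
definition sympl_eigs :: "('n::finite) sqmat \<Rightarrow> real list" where
  "sympl_eigs A = (THE L. \<exists>M D. symplectic M \<and> (\<forall>i. 0 \<le> D $ i) \<and>
       transpose M ** A ** M = diag2 D \<and> L = sorted_entries D)"

definition majorized :: "real list \<Rightarrow> real list \<Rightarrow> bool" where
  "majorized x y \<longleftrightarrow> length x = length y \<and>
     (\<forall>k. 1 \<le> k \<and> k \<le> length x \<longrightarrow>
        sum_list (take k (sort x)) \<ge> sum_list (take k (sort y))) \<and>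
     sum_list x = sum_list y"

end

theory Submission
  imports Defs "HOL-Computational_Algebra.Polynomial"
begin

text \<open>
  By the generalized Williamson theorem, \<open>M\<^sub>A\<^sup>T A M\<^sub>A = D\<^sub>A \<oplus> D\<^sub>A\<close> and
  \<open>M\<^sub>B\<^sup>T B M\<^sub>B = D\<^sub>B \<oplus> D\<^sub>B\<close> with symplectic \<open>M\<^sub>A\<close>, \<open>M\<^sub>B\<close>. The normal form is built on the
  splitting of \<open>\<real>\<^sup>2\<^sup>n\<close> into the kernel \<open>W\<close> of \<open>A\<close> and its symplectic complement, on which \<open>A\<close> is
  positive definite: there a symplectic basis diagonalising \<open>A\<close> is split off pair by pair, each
  pair maximising the symplectic form over the product of the \<open>A\<close>-unit ball with itself, and on \<open>W\<close>
  any symplectic basis will do. The diagonal is unique up to order because \<open>J D\<close> is determined up to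
  similarity and \<open>(J D)\<^sup>2 = - D\<^sup>2\<close>.

  If \<open>d(A) \<prec> d(B)\<close>, Rado's theorem writes \<open>D\<^sub>A = \<Sum>\<pi>. p(\<pi>) D\<^sub>B\<circ>\<pi>\<close> as a convex combination of
  permutations of \<open>D\<^sub>B\<close>. Permuting both halves of the coordinates by \<open>\<pi>\<close> is a symplectic permutation
  matrix \<open>P\<^sub>\<pi>\<close> with \<open>P\<^sub>\<pi>\<^sup>T (D \<oplus> D) P\<^sub>\<pi> = D\<circ>\<pi> \<oplus> D\<circ>\<pi>\<close>, so \<open>M\<^sub>\<pi> = M\<^sub>B P\<^sub>\<pi> M\<^sub>A\<^sup>-\<^sup>1\<close> works.
\<close>

lemma matrix_vector_mult_uminus_left: "(- A) *v x = - (A *v (x::real^'m::finite))"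
  by (simp add: vec_eq_iff matrix_vector_mult_def sum_negf)

lemma matrix_vector_mult_uminus_right: "A *v (- x) = - (A *v (x::real^'m::finite))"
  by (simp add: vec_eq_iff matrix_vector_mult_def sum_negf)

lemma matrix_mul_uminus_left: "(- A) ** B = - (A ** (B::real^'m::finite^'k::finite))"
  by (simp add: vec_eq_iff matrix_matrix_mult_def sum_negf)

lemma matrix_mul_uminus_right: "A ** (- B) = - ((A::real^'m::finite^'k::finite) ** B)"
  by (simp add: vec_eq_iff matrix_matrix_mult_def sum_negf)

lemma matrix_diff_ldistrib: "A ** (B - C) = A ** B - A ** (C::real^'m::finite^'k::finite)"
  by (simp add: vec_eq_iff matrix_matrix_mult_def sum_subtractf algebra_simps)

lemma matrix_diff_rdistrib: "(B - C) ** A = B ** A - C ** (A::real^'m::finite^'k::finite)"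
  by (simp add: vec_eq_iff matrix_matrix_mult_def sum_subtractf algebra_simps)

lemma matrix_add_rdistrib: "(B + C) ** A = B ** A + C ** (A::real^'m::finite^'k::finite)"
  by (simp add: vec_eq_iff matrix_matrix_mult_def sum.distrib algebra_simps)

lemma inner_matrix_vector_transpose:
  "(x::real^'m::finite) \<bullet> (A *v y) = y \<bullet> (transpose A *v x)"
  by (metis dot_lmul_matrix inner_commute transpose_matrix_vector)

lemma inner_matrix_vector_symmetric:
  "transpose A = A \<Longrightarrow> x \<bullet> (A *v y) = y \<bullet> (A *v (x::real^'m::finite))"
  by (subst inner_matrix_vector_transpose) simp

lemma congruence_entry:
  "(transpose M ** X ** M) $ a $ b = column a M \<bullet> (X *v column b M)"
  by (simp add: matrix_matrix_mult_def matrix_vector_mult_def inner_vec_def column_def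
      transpose_def sum_distrib_left sum_distrib_right mult.assoc mult.left_commute)
    (subst sum.swap, simp add: mult.commute mult.left_commute)

lemma congruence_sum:
  "finite I \<Longrightarrow> transpose X ** (\<Sum>i\<in>I. c i *\<^sub>R Y i) ** X
     = (\<Sum>i\<in>I. c i *\<^sub>R (transpose X ** Y i ** (X::real^'m::finite^'m)))"
  by (induct I rule: finite_induct)
     (auto simp: matrix_add_ldistrib matrix_add_rdistrib matrix_scalar_ac scalar_matrix_assoc)

lemma sum_UNIV_Plus:
  "sum f (UNIV :: ('a::finite + 'b::finite) set) = (\<Sum>i\<in>UNIV. f (Inl i)) + (\<Sum>i\<in>UNIV. f (Inr i))"
  by (simp add: UNIV_Plus_UNIV[symmetric] sum.Plus del: UNIV_Plus_UNIV)

section \<open>The symplectic form and the symplectic group\<close>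

definition sympl_form :: "('n::finite) vec2 \<Rightarrow> 'n vec2 \<Rightarrow> real" where
  "sympl_form x y = x \<bullet> (J_mat *v y)"

lemma J_mat_entry: "(J_mat :: ('n::finite) sqmat) $ a $ b =
   (case (a, b) of (Inl i, Inr j) \<Rightarrow> (if i = j then 1 else 0)
    | (Inr i, Inl j) \<Rightarrow> (if i = j then -1 else 0) | _ \<Rightarrow> 0)"
  unfolding J_mat_def by simp

lemma transpose_J_mat: "transpose (J_mat :: ('n::finite) sqmat) = - J_mat"
  by (auto simp: vec_eq_iff transpose_def J_mat_entry split: sum.splits)

lemma J_mat_mult_J_mat: "(J_mat :: ('n::finite) sqmat) ** J_mat = - mat 1"
proof -
  have "((J_mat :: 'n sqmat) ** J_mat) $ a $ b = (- mat 1 :: 'n sqmat) $ a $ b" for a b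
    by (cases a; cases b) (simp_all add: matrix_matrix_mult_def sum_UNIV_Plus J_mat_entry mat_def
        if_distrib[where f="\<lambda>x. x * _"] cong: if_cong)
  then show ?thesis by (simp add: vec_eq_iff)
qed

lemma sympl_form_antisym: "sympl_form x y = - sympl_form y x"
  unfolding sympl_form_def
  by (subst inner_matrix_vector_transpose)
    (simp add: transpose_J_mat matrix_vector_mult_uminus_left)

lemma sympl_form_self [simp]: "sympl_form x x = 0"
  using sympl_form_antisym[of x x] by simp

lemma sympl_form_add_left: "sympl_form (x + y) z = sympl_form x z + sympl_form y z"
  by (simp add: sympl_form_def inner_add_left)

lemma sympl_form_add_right: "sympl_form z (x + y) = sympl_form z x + sympl_form z y"
  by (simp add: sympl_form_def inner_add_right matrix_vector_right_distrib)

lemma sympl_form_diff_left: "sympl_form (x - y) z = sympl_form x z - sympl_form y z"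
  by (simp add: sympl_form_def inner_diff_left)

lemma sympl_form_diff_right: "sympl_form z (x - y) = sympl_form z x - sympl_form z y"
  by (simp add: sympl_form_def inner_diff_right matrix_vector_mult_diff_distrib)

lemma sympl_form_scaleR_left: "sympl_form (c *\<^sub>R x) z = c * sympl_form x z"
  by (simp add: sympl_form_def)

lemma sympl_form_scaleR_right: "sympl_form z (c *\<^sub>R x) = c * sympl_form z x"
  by (simp add: sympl_form_def matrix_vector_mult_scaleR)

lemma sympl_form_zero_left [simp]: "sympl_form 0 z = 0"
  by (simp add: sympl_form_def)

lemma sympl_form_zero_right [simp]: "sympl_form z 0 = 0"
  by (simp add: sympl_form_def)

lemma sympl_form_sum_left:
  "finite S \<Longrightarrow> sympl_form (\<Sum>i\<in>S. f i) z = (\<Sum>i\<in>S. sympl_form (f i) z)"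
  by (induct S rule: finite_induct) (auto simp: sympl_form_add_left)

lemmas sympl_form_simps =
  sympl_form_add_left sympl_form_add_right sympl_form_diff_left sympl_form_diff_right
  sympl_form_scaleR_left sympl_form_scaleR_right

lemma linear_sympl_form_left: "linear (\<lambda>x. sympl_form x y)"
  by (rule linearI) (simp_all add: sympl_form_simps)

lemma linear_sympl_form_right: "linear (\<lambda>y. sympl_form x y)"
  by (rule linearI) (simp_all add: sympl_form_simps)

lemma sympl_form_nondegenerate: "sympl_form z (- (J_mat *v z)) = z \<bullet> z"
  by (simp add: sympl_form_def matrix_vector_mult_uminus_right matrix_vector_mul_assoc
      J_mat_mult_J_mat matrix_vector_mult_uminus_left)

lemma sympl_form_vanishes_on_span:
  assumes "w \<in> span S" "\<And>s. s \<in> S \<Longrightarrow> sympl_form z s = 0"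
  shows "sympl_form z w = 0"
proof -
  have "subspace {w. sympl_form z w = 0}"
    by (auto simp: subspace_def sympl_form_simps)
  then show ?thesis using span_induct[OF assms(1)] assms(2) by blast
qed

lemma symplectic_subspace_iff:
  "symplectic_subspace W \<longleftrightarrow>
     subspace W \<and> (\<forall>u\<in>W. u \<noteq> 0 \<longrightarrow> (\<exists>v\<in>W. sympl_form u v \<noteq> 0))"
  by (simp add: symplectic_subspace_def sympl_form_def)

lemma symplectic_iff_columns:
  "symplectic M \<longleftrightarrow> (\<forall>a b. sympl_form (column a M) (column b M) = J_mat $ a $ b)"
  unfolding symplectic_def sympl_form_def by (simp add: vec_eq_iff congruence_entry)

text \<open>For symplectic \<open>M\<close>, \<open>M\<^sup>-\<^sup>1 = J\<^sup>-\<^sup>1 M\<^sup>T J\<close>, and \<open>J\<^sup>-\<^sup>1 = - J\<close>.\<close>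

definition sympl_inv :: "('n::finite) sqmat \<Rightarrow> 'n sqmat" where
  "sympl_inv M = - (J_mat ** transpose M ** J_mat)"

lemma sympl_inv_left: assumes "symplectic M" shows "sympl_inv M ** M = mat 1"
proof -
  have "sympl_inv M ** M = - (J_mat ** (transpose M ** J_mat ** M))"
    by (simp add: sympl_inv_def matrix_mul_uminus_left matrix_mul_assoc)
  also have "\<dots> = mat 1" using assms by (simp add: symplectic_def J_mat_mult_J_mat)
  finally show ?thesis .
qed

lemma sympl_inv_right: "symplectic M \<Longrightarrow> M ** sympl_inv M = mat 1"
  using sympl_inv_left matrix_left_right_inverse by blast

lemma symplectic_mult:
  assumes "symplectic X" "symplectic Y" shows "symplectic (X ** Y)"
proof -
  have "transpose (X ** Y) ** J_mat ** (X ** Y) = transpose Y ** (transpose X ** J_mat ** X) ** Y"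
    by (simp add: matrix_transpose_mul matrix_mul_assoc)
  then show ?thesis using assms by (simp add: symplectic_def)
qed

lemma symplectic_sympl_inv: assumes "symplectic M" shows "symplectic (sympl_inv M)"
proof -
  have "transpose (sympl_inv M) ** J_mat ** sympl_inv M
      = transpose (sympl_inv M) ** (transpose M ** J_mat ** M) ** sympl_inv M"
    using assms by (simp add: symplectic_def)
  also have "\<dots> = transpose (M ** sympl_inv M) ** J_mat ** (M ** sympl_inv M)"
    by (simp add: matrix_transpose_mul matrix_mul_assoc)
  finally show ?thesis using assms by (simp add: symplectic_def sympl_inv_right)
qed

lemma J_mat_mult_transpose_symplectic:
  "symplectic N \<Longrightarrow> J_mat ** transpose N = sympl_inv N ** J_mat"
  by (simp add: sympl_inv_def matrix_mul_uminus_left matrix_mul_uminus_right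
      J_mat_mult_J_mat flip: matrix_mul_assoc)

lemma congruence_sympl_inv:
  assumes "symplectic M"
  shows "A = transpose (sympl_inv M) ** (transpose M ** A ** M) ** sympl_inv M"
proof -
  have "A = transpose (M ** sympl_inv M) ** A ** (M ** sympl_inv M)"
    by (simp add: sympl_inv_right[OF assms])
  then show ?thesis by (simp add: matrix_transpose_mul matrix_mul_assoc)
qed

section \<open>The Williamson normal form\<close>

definition quad_form :: "('n::finite) sqmat \<Rightarrow> 'n vec2 \<Rightarrow> real" where
  "quad_form A x = x \<bullet> (A *v x)"

definition pos_def_on :: "('n::finite) sqmat \<Rightarrow> 'n vec2 set \<Rightarrow> bool" where
  "pos_def_on A V \<longleftrightarrow> (\<forall>z\<in>V. z \<noteq> 0 \<longrightarrow> 0 < quad_form A z)"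

lemma quad_form_add_scaleR:
  assumes "transpose A = A"
  shows "quad_form A (x + t *\<^sub>R z) = quad_form A x + 2 * t * (z \<bullet> (A *v x)) + t\<^sup>2 * quad_form A z"
  using inner_matrix_vector_symmetric[OF assms, of x z]
  by (simp add: quad_form_def inner_add_left inner_add_right matrix_vector_right_distrib
      matrix_vector_mult_scaleR power2_eq_square algebra_simps)

lemma quad_form_scaleR: "quad_form A (c *\<^sub>R x) = c\<^sup>2 * quad_form A x"
  by (simp add: quad_form_def matrix_vector_mult_scaleR power2_eq_square)

lemma quad_form_uminus: "quad_form A (- x) = quad_form A x"
  by (simp add: quad_form_def matrix_vector_mult_uminus_right)

lemma quad_form_zero [simp]: "quad_form A 0 = 0"
  by (simp add: quad_form_def)

lemma continuous_on_quad_form: "continuous_on S (quad_form A)"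
  unfolding quad_form_def by (intro continuous_intros linear_continuous_on) simp

lemma quad_form_normalize:
  assumes "0 < quad_form A w" shows "quad_form A ((1 / sqrt (quad_form A w)) *\<^sub>R w) = 1"
  using assms by (simp add: quad_form_scaleR power_divide)

lemma linear_coeff_zero_if_quadratic_nonpos:
  fixes P Q :: real
  assumes "\<forall>t. 2 * t * P + t\<^sup>2 * Q \<le> 0"
  shows "P = 0"
proof (rule ccontr)
  assume "P \<noteq> 0"
  define s where "s = 1 / (\<bar>Q\<bar> + 1)"
  have s0: "s > 0" by (simp add: s_def add_pos_nonneg)
  have "s * \<bar>Q\<bar> < 1" unfolding s_def by (simp add: field_simps)
  moreover have "s * (- \<bar>Q\<bar>) \<le> s * Q" by (rule mult_left_mono) (use s0 in auto)
  ultimately have "2 + s * Q > 0" by simp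
  then have "s * P\<^sup>2 * (2 + s * Q) > 0" using s0 \<open>P \<noteq> 0\<close> by simp
  moreover have "2 * (s * P) * P + (s * P)\<^sup>2 * Q = s * P\<^sup>2 * (2 + s * Q)"
    by (simp add: power2_eq_square algebra_simps)
  ultimately show False using assms[rule_format, of "s * P"] by simp
qed

lemma psd_quad_form_zero_imp_kernel:
  assumes "psd_sym A" and "quad_form A z = 0"
  shows "A *v z = 0"
proof -
  have sym: "transpose A = A" and nn: "\<And>x. 0 \<le> quad_form A x"
    using assms(1) by (auto simp: psd_sym_def quad_form_def)
  have "y \<bullet> (A *v z) = 0" for y
  proof -
    have "\<forall>t. 2 * t * - (y \<bullet> (A *v z)) + t\<^sup>2 * - quad_form A y \<le> 0"
    proof
      fix t
      show "2 * t * - (y \<bullet> (A *v z)) + t\<^sup>2 * - quad_form A y \<le> 0"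
        using nn[of "z + t *\<^sub>R y"] quad_form_add_scaleR[OF sym, of z t y] assms(2) by simp
    qed
    then show ?thesis using linear_coeff_zero_if_quadratic_nonpos by fastforce
  qed
  from this[of "A *v z"] show ?thesis by simp
qed

lemma pos_def_on_coercive:
  assumes V: "subspace V" and pd: "pos_def_on A V"
  obtains c where "c > 0" "\<And>x. x \<in> V \<Longrightarrow> c * (norm x)\<^sup>2 \<le> quad_form A x"
proof (cases "V \<subseteq> {0}")
  case True
  then show thesis by (intro that[of 1]) auto
next
  case False
  then obtain z where z: "z \<in> V" "z \<noteq> 0" by blast
  define S where "S = V \<inter> sphere 0 1"
  have "compact S" unfolding S_def
    using closed_subspace[OF V] by (intro closed_Int_compact compact_sphere)
  moreover have "(1 / norm z) *\<^sub>R z \<in> S"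
    using z V unfolding S_def by (auto simp: subspace_scale)
  ultimately obtain x0 where x0: "x0 \<in> S" "\<forall>y\<in>S. quad_form A x0 \<le> quad_form A y"
    using continuous_attains_inf[OF _ _ continuous_on_quad_form] by blast
  have "quad_form A x0 * (norm x)\<^sup>2 \<le> quad_form A x" if "x \<in> V" for x
  proof (cases "x = 0")
    case False
    have "(1 / norm x) *\<^sub>R x \<in> S" using that False V unfolding S_def by (auto simp: subspace_scale)
    then have "quad_form A x0 \<le> (1 / norm x)\<^sup>2 * quad_form A x"
      using x0(2) quad_form_scaleR by metis
    then show ?thesis using False by (simp add: field_simps)
  qed simp
  moreover have "quad_form A x0 > 0" using x0(1) pd unfolding S_def pos_def_on_def by auto
  ultimately show thesis by (intro that[of "quad_form A x0"]) auto
qed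

lemma compact_quad_form_sublevel:
  assumes V: "subspace V" and pd: "pos_def_on A V"
  shows "compact {x\<in>V. quad_form A x \<le> 1}"
proof -
  obtain c where c: "c > 0" "\<And>x. x \<in> V \<Longrightarrow> c * (norm x)\<^sup>2 \<le> quad_form A x"
    using pos_def_on_coercive[OF V pd] by blast
  have "norm x \<le> sqrt (1 / c)" if "x \<in> V" "quad_form A x \<le> 1" for x
  proof -
    have "(norm x)\<^sup>2 \<le> 1 / c" using c that by (simp add: field_simps) (smt (verit))
    then show ?thesis using real_le_rsqrt by blast
  qed
  then have "bounded {x\<in>V. quad_form A x \<le> 1}" unfolding bounded_iff by blast
  moreover have "closed {x\<in>V. quad_form A x \<le> 1}"
  proof -
    have "{x\<in>V. quad_form A x \<le> 1} = V \<inter> {x. quad_form A x \<le> 1}" by blast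
    then show ?thesis
      using closed_subspace[OF V] closed_Collect_le[OF continuous_on_quad_form continuous_on_const]
      by (metis closed_Int)
  qed
  ultimately show ?thesis by (simp add: compact_eq_bounded_closed)
qed

lemma sq_le_quad_form_if_bounded_on_sublevel:
  fixes g :: "('n::finite) vec2 \<Rightarrow> real"
  assumes g: "linear g" and V: "subspace V" and pd: "pos_def_on A V"
    and bound: "\<And>a. a \<in> V \<Longrightarrow> quad_form A a \<le> 1 \<Longrightarrow> g a \<le> \<mu>"
    and w: "w \<in> V"
  shows "(g w)\<^sup>2 \<le> \<mu>\<^sup>2 * quad_form A w"
proof (cases "w = 0")
  case True
  then show ?thesis using linear_0[OF g] by simp
next
  case False
  have q: "0 < quad_form A w" using pd w False by (auto simp: pos_def_on_def)
  define s where "s = 1 / sqrt (quad_form A w)"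
  have "quad_form A (s *\<^sub>R w) = 1" "quad_form A (- (s *\<^sub>R w)) = 1"
    using quad_form_normalize[OF q] by (simp_all add: s_def quad_form_uminus)
  moreover have "s *\<^sub>R w \<in> V" "- (s *\<^sub>R w) \<in> V"
    using V w by (simp_all add: subspace_scale subspace_neg)
  ultimately have "g (s *\<^sub>R w) \<le> \<mu>" "g (- (s *\<^sub>R w)) \<le> \<mu>"
    using bound by auto
  then have "\<bar>s * g w\<bar> \<le> \<mu>"
    by (simp add: linear_scale[OF g] linear_neg[OF g])
  then have "s\<^sup>2 * (g w)\<^sup>2 \<le> \<mu>\<^sup>2"
    by (metis abs_ge_zero abs_power2 power_mono power2_abs power_mult_distrib)
  moreover have "s\<^sup>2 = 1 / quad_form A w" using q by (simp add: s_def power_divide)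
  ultimately show ?thesis using q by (simp add: field_simps)
qed

lemma linear_eq_if_sq_le_quad_form:
  fixes g :: "('n::finite) vec2 \<Rightarrow> real"
  assumes sym: "transpose A = A" and g: "linear g" and V: "subspace V"
    and le: "\<And>w. w \<in> V \<Longrightarrow> (g w)\<^sup>2 \<le> \<mu>\<^sup>2 * quad_form A w"
    and x: "x \<in> V" "g x = \<mu>" "quad_form A x = 1" and \<mu>: "\<mu> \<noteq> 0" and z: "z \<in> V"
  shows "g z = \<mu> * (z \<bullet> (A *v x))"
proof -
  have "2 * t * (\<mu> * g z - \<mu>\<^sup>2 * (z \<bullet> (A *v x))) + t\<^sup>2 * ((g z)\<^sup>2 - \<mu>\<^sup>2 * quad_form A z) \<le> 0" for t
  proof -
    have "(g (x + t *\<^sub>R z))\<^sup>2 \<le> \<mu>\<^sup>2 * quad_form A (x + t *\<^sub>R z)"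
      using le V x(1) z by (simp add: subspace_add subspace_scale)
    then show ?thesis
      using x(2,3) by (simp add: linear_add[OF g] linear_scale[OF g] quad_form_add_scaleR[OF sym]
          power2_eq_square algebra_simps)
  qed
  then have "\<mu> * (g z - \<mu> * (z \<bullet> (A *v x))) = 0"
    using linear_coeff_zero_if_quadratic_nonpos by (fastforce simp: power2_eq_square algebra_simps)
  then show ?thesis using \<mu> by simp
qed

lemma exists_max_sympl_form_on_sublevel:
  assumes "subspace V" "pos_def_on A V"
  obtains x y where "x \<in> V" "quad_form A x \<le> 1" "y \<in> V" "quad_form A y \<le> 1"
    "\<And>a b. a \<in> V \<Longrightarrow> quad_form A a \<le> 1 \<Longrightarrow> b \<in> V \<Longrightarrow> quad_form A b \<le> 1 \<Longrightarrow>
       sympl_form a b \<le> sympl_form x y"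
proof -
  let ?K = "{x\<in>V. quad_form A x \<le> 1}"
  have K: "compact ?K" by (rule compact_quad_form_sublevel[OF assms])
  have "continuous_on (?K \<times> ?K) (\<lambda>p. sympl_form (fst p) (snd p))"
    unfolding sympl_form_def
    by (intro continuous_intros linear_continuous_on
        bounded_linear_compose[OF matrix_vector_mul_bounded_linear bounded_linear_snd])
  moreover have "(0, 0) \<in> ?K \<times> ?K" using assms(1) by (simp add: subspace_0)
  ultimately obtain p where "p \<in> ?K \<times> ?K"
      "\<forall>q\<in>?K \<times> ?K. sympl_form (fst q) (snd q) \<le> sympl_form (fst p) (snd p)"
    using continuous_attains_sup[OF compact_Times[OF K K]] by blast
  then show thesis using that[of "fst p" "snd p"] by (auto simp: mem_Times_iff)
qed

lemma sympl_form_max_on_sublevel_pos: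
  assumes V: "symplectic_subspace V" and pd: "pos_def_on A V" and ne: "V \<noteq> {0}"
    and max: "\<And>a b. a \<in> V \<Longrightarrow> quad_form A a \<le> 1 \<Longrightarrow> b \<in> V \<Longrightarrow> quad_form A b \<le> 1 \<Longrightarrow>
       sympl_form a b \<le> \<mu>"
  shows "\<mu> > 0"
proof (rule ccontr)
  assume "\<not> \<mu> > 0"
  have sV: "subspace V" using V by (simp add: symplectic_subspace_iff)
  have "sympl_form a b = 0" if "a \<in> V" "b \<in> V" for a b
  proof -
    have "sympl_form a c = 0" if "c \<in> V" "quad_form A c \<le> 1" for c
      using sq_le_quad_form_if_bounded_on_sublevel[OF linear_sympl_form_left sV pd _ \<open>a \<in> V\<close>,
          of c \<mu>] max that \<open>\<not> \<mu> > 0\<close> by fastforce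
    then show ?thesis
      using sq_le_quad_form_if_bounded_on_sublevel[OF linear_sympl_form_right sV pd _ \<open>b \<in> V\<close>,
          of a 0] by simp
  qed
  moreover obtain z where "z \<in> V" "z \<noteq> 0" using ne sV subspace_0 by blast
  ultimately show False using V by (auto simp: symplectic_subspace_iff)
qed

text \<open>The pair maximises the symplectic form over the product of the \<open>A\<close>-unit ball of \<open>V\<close>
  with itself; the identities are the first-order conditions at the maximum.\<close>

lemma exists_extremal_sympl_pair:
  assumes sym: "transpose A = A" and V: "symplectic_subspace V" and pd: "pos_def_on A V"
    and ne: "V \<noteq> {0}"
  shows "\<exists>x y \<mu>. x \<in> V \<and> y \<in> V \<and> \<mu> > 0 \<and> sympl_form x y = \<mu> \<and>
     quad_form A x = 1 \<and> quad_form A y = 1 \<and>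
     (\<forall>z\<in>V. sympl_form z y = \<mu> * (z \<bullet> (A *v x))) \<and> (\<forall>z\<in>V. sympl_form x z = \<mu> * (z \<bullet> (A *v y)))"
proof -
  have sV: "subspace V" using V by (simp add: symplectic_subspace_iff)
  obtain x y where xy: "x \<in> V" "quad_form A x \<le> 1" "y \<in> V" "quad_form A y \<le> 1"
    and max: "\<And>a b. a \<in> V \<Longrightarrow> quad_form A a \<le> 1 \<Longrightarrow> b \<in> V \<Longrightarrow> quad_form A b \<le> 1 \<Longrightarrow>
       sympl_form a b \<le> sympl_form x y"
    using exists_max_sympl_form_on_sublevel[OF sV pd] by blast
  define \<mu> where "\<mu> = sympl_form x y"
  have bound_left: "(sympl_form w b)\<^sup>2 \<le> \<mu>\<^sup>2 * quad_form A w"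
    if "b \<in> V" "quad_form A b \<le> 1" "w \<in> V" for w b
    by (rule sq_le_quad_form_if_bounded_on_sublevel[OF linear_sympl_form_left sV pd _ \<open>w \<in> V\<close>])
      (use max that in \<open>auto simp: \<mu>_def\<close>)
  have bound_right: "(sympl_form a w)\<^sup>2 \<le> \<mu>\<^sup>2 * quad_form A w"
    if "a \<in> V" "quad_form A a \<le> 1" "w \<in> V" for w a
    by (rule sq_le_quad_form_if_bounded_on_sublevel[OF linear_sympl_form_right sV pd _ \<open>w \<in> V\<close>])
      (use max that in \<open>auto simp: \<mu>_def\<close>)
  have \<mu>_pos: "\<mu> > 0"
    using sympl_form_max_on_sublevel_pos[OF V pd ne] max unfolding \<mu>_def by blast
  have "quad_form A x = 1" "quad_form A y = 1"
    using bound_left[OF xy(3,4) xy(1)] bound_right[OF xy(1,2) xy(3)] xy(2,4) \<mu>_pos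
    unfolding \<mu>_def by auto
  with xy \<mu>_pos show ?thesis
    using linear_eq_if_sq_le_quad_form[OF sym linear_sympl_form_left sV bound_left[OF xy(3,4)]
        xy(1)]
      linear_eq_if_sq_le_quad_form[OF sym linear_sympl_form_right sV bound_right[OF xy(1,2)]
        xy(3)]
    unfolding \<mu>_def by (metis less_irrefl sympl_form_antisym)
qed

definition sympl_system :: "(nat \<Rightarrow> ('n::finite) vec2) \<Rightarrow> (nat \<Rightarrow> 'n vec2) \<Rightarrow> nat \<Rightarrow> bool" where
  "sympl_system u v k \<longleftrightarrow> (\<forall>i<k. \<forall>j<k. sympl_form (u i) (v j) = (if i = j then 1 else 0) \<and>
      sympl_form (u i) (u j) = 0 \<and> sympl_form (v i) (v j) = 0)"

text \<open>The vectors \<open>u i\<close>, \<open>v i\<close> (\<open>i < k\<close>) are meant to become the columns \<open>i\<close> of the two halves of a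
  symplectic \<open>M\<close> with \<open>M\<^sup>T A M = diag2 d\<close>.\<close>

definition williamson_system ::
    "('n::finite) sqmat \<Rightarrow> (nat \<Rightarrow> 'n vec2) \<Rightarrow> (nat \<Rightarrow> 'n vec2) \<Rightarrow> (nat \<Rightarrow> real) \<Rightarrow> nat \<Rightarrow> bool" where
  "williamson_system A u v d k \<longleftrightarrow> sympl_system u v k \<and>
     (\<forall>i<k. \<forall>j<k. u i \<bullet> (A *v v j) = 0 \<and> u i \<bullet> (A *v u j) = (if i = j then d i else 0) \<and>
        v i \<bullet> (A *v v j) = (if i = j then d i else 0))"

definition append_seq :: "nat \<Rightarrow> (nat \<Rightarrow> 'a) \<Rightarrow> (nat \<Rightarrow> 'a) \<Rightarrow> nat \<Rightarrow> 'a" where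
  "append_seq k f g i = (if i < k then f i else g (i - k))"

lemma image_append_seq: "append_seq k f g ` {..<k + l} = f ` {..<k} \<union> g ` {..<l}"
proof -
  have "g j \<in> append_seq k f g ` {..<k + l}" if "j < l" for j
    using that image_eqI[of "g j" "append_seq k f g" "k + j"] by (simp add: append_seq_def)
  then show ?thesis by (force simp: append_seq_def)
qed

lemma williamson_system_append:
  assumes sym: "transpose A = A"
    and W: "williamson_system A u v d k" and W': "williamson_system A u' v' d' l"
    and orth: "\<And>a b. a \<in> u ` {..<k} \<union> v ` {..<k} \<Longrightarrow> b \<in> u' ` {..<l} \<union> v' ` {..<l} \<Longrightarrow>
       sympl_form a b = 0 \<and> a \<bullet> (A *v b) = 0"
  shows "williamson_system A (append_seq k u u') (append_seq k v v') (append_seq k d d') (k + l)"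
proof -
  have orth': "sympl_form a b = 0 \<and> sympl_form b a = 0 \<and> a \<bullet> (A *v b) = 0 \<and> b \<bullet> (A *v a) = 0"
    if "a \<in> u ` {..<k} \<union> v ` {..<k}" "b \<in> u' ` {..<l} \<union> v' ` {..<l}" for a b
    using orth[OF that] sympl_form_antisym[of b a] inner_matrix_vector_symmetric[OF sym, of a b]
    by simp
  have cross: "sympl_form (u i) (u' j) = 0" "sympl_form (u i) (v' j) = 0"
    "sympl_form (v i) (u' j) = 0" "sympl_form (v i) (v' j) = 0"
    "sympl_form (u' j) (u i) = 0" "sympl_form (u' j) (v i) = 0"
    "sympl_form (v' j) (u i) = 0" "sympl_form (v' j) (v i) = 0"
    "u i \<bullet> (A *v u' j) = 0" "u i \<bullet> (A *v v' j) = 0" "v i \<bullet> (A *v u' j) = 0" "v i \<bullet> (A *v v' j) = 0"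
    "u' j \<bullet> (A *v u i) = 0" "u' j \<bullet> (A *v v i) = 0" "v' j \<bullet> (A *v u i) = 0" "v' j \<bullet> (A *v v i) = 0"
    if "i < k" "j < l" for i j
    using orth'[of "u i" "u' j"] orth'[of "u i" "v' j"] orth'[of "v i" "u' j"]
      orth'[of "v i" "v' j"] that
    by auto
  show ?thesis
    using W W' unfolding williamson_system_def sympl_system_def append_seq_def
    by (auto simp: cross)
qed

lemma span_append_seq:
  assumes "\<And>w. w \<in> V \<Longrightarrow>
    \<exists>p \<in> span (u ` {..<k} \<union> v ` {..<k}). w - p \<in> span (u' ` {..<l} \<union> v' ` {..<l})"
  shows "V \<subseteq> span (append_seq k u u' ` {..<k + l} \<union> append_seq k v v' ` {..<k + l})"
    (is "_ \<subseteq> span ?S")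
proof
  fix w assume "w \<in> V"
  then obtain p where p: "p \<in> span (u ` {..<k} \<union> v ` {..<k})"
    "w - p \<in> span (u' ` {..<l} \<union> v' ` {..<l})"
    using assms by blast
  have "u ` {..<k} \<union> v ` {..<k} \<subseteq> ?S" "u' ` {..<l} \<union> v' ` {..<l} \<subseteq> ?S"
    unfolding image_append_seq by auto
  then have "p \<in> span ?S" "w - p \<in> span ?S" using p by (meson span_mono subsetD)+
  then have "p + (w - p) \<in> span ?S" by (rule span_add)
  then show "w \<in> span ?S" by simp
qed

lemma williamson_system_sympl_system: "williamson_system A u v d k \<Longrightarrow> sympl_system u v k"
  by (simp add: williamson_system_def)

lemma williamson_system_kernel:
  assumes "sympl_system u v k" "\<And>i. i < k \<Longrightarrow> A *v u i = 0 \<and> A *v v i = 0"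
  shows "williamson_system A u v (\<lambda>_. 0) k"
  using assms by (simp add: williamson_system_def)

definition sympl_compl :: "('n::finite) vec2 set \<Rightarrow> 'n vec2 set" where
  "sympl_compl S = {z. \<forall>w\<in>S. sympl_form z w = 0}"

lemma subspace_sympl_compl: "subspace (sympl_compl S)"
  by (auto simp: subspace_def sympl_compl_def sympl_form_simps)

lemma symplectic_subspace_UNIV: "symplectic_subspace (UNIV :: ('n::finite) vec2 set)"
  unfolding symplectic_subspace_iff
proof (intro conjI ballI impI subspace_UNIV)
  fix u :: "'n vec2" assume "u \<noteq> 0"
  then show "\<exists>v\<in>UNIV. sympl_form u v \<noteq> 0"
    using sympl_form_nondegenerate[of u] by (intro bexI[of _ "- (J_mat *v u)"]) auto
qed

lemma symplectic_subspace_inter_sympl_compl: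
  assumes V: "symplectic_subspace V"
    and decomp: "\<And>w. w \<in> V \<Longrightarrow> \<exists>p \<in> V \<inter> sympl_compl S. w - p \<in> span S"
  shows "symplectic_subspace (V \<inter> sympl_compl S)"
  unfolding symplectic_subspace_iff
proof (intro conjI ballI impI)
  show "subspace (V \<inter> sympl_compl S)"
    using V subspace_sympl_compl by (auto simp: symplectic_subspace_iff intro: subspace_inter)
  fix z assume z: "z \<in> V \<inter> sympl_compl S" "z \<noteq> 0"
  then obtain w where w: "w \<in> V" "sympl_form z w \<noteq> 0"
    using V by (auto simp: symplectic_subspace_iff)
  obtain p where p: "p \<in> V \<inter> sympl_compl S" "w - p \<in> span S" using decomp[OF w(1)] by blast
  have "sympl_form z (w - p) = 0"
    by (rule sympl_form_vanishes_on_span[OF p(2)]) (use z in \<open>auto simp: sympl_compl_def\<close>)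
  then have "sympl_form z p \<noteq> 0" using w(2) by (simp add: sympl_form_diff_right)
  then show "\<exists>v\<in>V \<inter> sympl_compl S. sympl_form z v \<noteq> 0" using p(1) by blast
qed

text \<open>Symplectic Gram--Schmidt: \<open>z - (\<Sum>i. \<omega>(z, f i) e i - \<omega>(z, e i) f i)\<close> is \<open>\<omega>\<close>-orthogonal to
  the system \<open>(e, f)\<close>, where \<open>\<omega>\<close> is the symplectic form.\<close>

lemma sympl_system_decomp:
  assumes sys: "sympl_system e f k" and V: "subspace V"
    and ef: "\<And>i. i < k \<Longrightarrow> e i \<in> V \<and> f i \<in> V" and z: "z \<in> V"
  shows "\<exists>p \<in> V \<inter> sympl_compl (e ` {..<k} \<union> f ` {..<k}). z - p \<in> span (e ` {..<k} \<union> f ` {..<k})"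
proof -
  have rel: "sympl_form (e i) (f j) = (if i = j then 1 else 0)" "sympl_form (e i) (e j) = 0"
    "sympl_form (f i) (f j) = 0" "sympl_form (f i) (e j) = (if i = j then -1 else 0)"
    if "i < k" "j < k" for i j
    using sys that sympl_form_antisym[of "f i" "e j"] by (auto simp: sympl_system_def)
  define q where "q = (\<Sum>i<k. sympl_form z (f i) *\<^sub>R e i - sympl_form z (e i) *\<^sub>R f i)"
  have "sympl_form q (e j) = sympl_form z (e j)" "sympl_form q (f j) = sympl_form z (f j)"
    if "j < k" for j
    unfolding q_def using that
    by (simp_all add: sympl_form_sum_left sympl_form_simps rel if_distrib[of "\<lambda>x. _ * x"]
        if_distrib[of uminus] cong: if_cong)
  then have "z - q \<in> sympl_compl (e ` {..<k} \<union> f ` {..<k})"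
    by (auto simp: sympl_compl_def sympl_form_diff_left)
  moreover have "q \<in> span (e ` {..<k} \<union> f ` {..<k})"
    unfolding q_def by (intro span_sum span_diff span_scale) (auto intro: span_base)
  moreover have "q \<in> V"
    unfolding q_def using V ef by (intro subspace_sum subspace_diff subspace_scale) auto
  ultimately show ?thesis using z V by (intro bexI[of _ "z - q"]) (auto simp: subspace_diff)
qed

lemma exists_williamson_pair:
  assumes sym: "transpose A = A" and V: "symplectic_subspace V" and pd: "pos_def_on A V"
    and ne: "V \<noteq> {0}"
  shows "\<exists>a b d. a \<in> V \<and> b \<in> V \<and> d > 0 \<and> williamson_system A (\<lambda>_. a) (\<lambda>_. b) (\<lambda>_. d) 1 \<and>
     (\<forall>z \<in> V \<inter> sympl_compl {a, b}. z \<bullet> (A *v a) = 0 \<and> z \<bullet> (A *v b) = 0)"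
proof -
  obtain x y \<mu> where xy: "x \<in> V" "y \<in> V" "\<mu> > 0" "sympl_form x y = \<mu>"
    "quad_form A x = 1" "quad_form A y = 1"
    and fo1: "\<forall>z\<in>V. sympl_form z y = \<mu> * (z \<bullet> (A *v x))"
    and fo2: "\<forall>z\<in>V. sympl_form x z = \<mu> * (z \<bullet> (A *v y))"
    using exists_extremal_sympl_pair[OF sym V pd ne] by blast
  have sV: "subspace V" using V by (simp add: symplectic_subspace_iff)
  define s where "s = 1 / sqrt \<mu>"
  have s2: "s * s = 1 / \<mu>" using xy(3) by (simp add: s_def)
  have "y \<bullet> (A *v x) = 0" using fo1 xy(2,3) by force
  then have Axy: "x \<bullet> (A *v y) = 0" using inner_matrix_vector_symmetric[OF sym] by metis
  have "williamson_system A (\<lambda>_. s *\<^sub>R x) (\<lambda>_. s *\<^sub>R y) (\<lambda>_. 1 / \<mu>) 1"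
    using xy Axy s2 sympl_form_antisym[of y x]
    by (simp add: williamson_system_def sympl_system_def quad_form_def sympl_form_simps
        matrix_vector_mult_scaleR mult.assoc[symmetric])
  moreover have "z \<bullet> (A *v (s *\<^sub>R x)) = 0 \<and> z \<bullet> (A *v (s *\<^sub>R y)) = 0"
    if "z \<in> V \<inter> sympl_compl {s *\<^sub>R x, s *\<^sub>R y}" for z
  proof -
    have "sympl_form z x = 0" "sympl_form z y = 0"
      using that s2 xy(3) by (auto simp: sympl_compl_def sympl_form_simps)
    then show ?thesis
      using fo1 fo2 that xy(3) sympl_form_antisym[of x z] by (simp add: matrix_vector_mult_scaleR)
  qed
  ultimately show ?thesis
    using xy sV by (intro exI[of _ "s *\<^sub>R x"] exI[of _ "s *\<^sub>R y"] exI[of _ "1 / \<mu>"])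
      (auto simp: subspace_scale)
qed

lemma sympl_compl_pair_split:
  assumes V: "symplectic_subspace V" and ab: "a \<in> V" "b \<in> V" "sympl_form a b = 1"
  defines "V' \<equiv> V \<inter> sympl_compl {a, b}"
  shows "\<And>w. w \<in> V \<Longrightarrow> \<exists>p \<in> V'. w - p \<in> span {a, b}"
    and "symplectic_subspace V'" and "dim V' < dim V"
proof -
  have sV: "subspace V" using V by (simp add: symplectic_subspace_iff)
  have "sympl_system (\<lambda>_. a) (\<lambda>_. b) 1" using ab(3) by (simp add: sympl_system_def)
  moreover have "(\<lambda>_. a) ` {..<1::nat} \<union> (\<lambda>_. b) ` {..<1::nat} = {a, b}" by auto
  ultimately show decomp: "\<exists>p \<in> V'. w - p \<in> span {a, b}" if "w \<in> V" for w
    using sympl_system_decomp[OF _ sV _ that, of "\<lambda>_. a" "\<lambda>_. b" 1] ab unfolding V'_def by auto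
  show V': "symplectic_subspace V'"
    unfolding V'_def by (rule symplectic_subspace_inter_sympl_compl[OF V decomp[unfolded V'_def]])
  have "a \<notin> V'" using ab(3) unfolding V'_def sympl_compl_def by auto
  then have "V' \<subset> V" using ab(1) unfolding V'_def by blast
  then show "dim V' < dim V"
    using V' sV by (metis dim_psubset span_eq_iff symplectic_subspace_iff)
qed

lemma williamson_system_exists:
  assumes sym: "transpose A = A"
  shows "symplectic_subspace V \<Longrightarrow> pos_def_on A V \<Longrightarrow>
    \<exists>k u v d. (\<forall>i<k. u i \<in> V \<and> v i \<in> V \<and> d i > 0) \<and> williamson_system A u v d k \<and>
      V \<subseteq> span (u ` {..<k} \<union> v ` {..<k})"
proof (induction "dim V" arbitrary: V rule: less_induct)
  case less
  note V = less.prems(1) and pd = less.prems(2)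
  show ?case
  proof (cases "V = {0}")
    case True
    then show ?thesis by (intro exI[of _ 0]) (auto simp: williamson_system_def sympl_system_def)
  next
    case False
    obtain a b d where ab: "a \<in> V" "b \<in> V" "d > 0"
      and W1: "williamson_system A (\<lambda>_. a) (\<lambda>_. b) (\<lambda>_. d) 1"
      and A_orth: "\<forall>z \<in> V \<inter> sympl_compl {a, b}. z \<bullet> (A *v a) = 0 \<and> z \<bullet> (A *v b) = 0"
      using exists_williamson_pair[OF sym V pd False] by blast
    have "sympl_form a b = 1" using W1 by (simp add: williamson_system_def sympl_system_def)
    note split = sympl_compl_pair_split[OF V ab(1,2) this]
    define V' where "V' = V \<inter> sympl_compl {a, b}"
    have E: "(\<lambda>_. a) ` {..<1::nat} \<union> (\<lambda>_. b) ` {..<1::nat} = {a, b}" by auto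
    have "pos_def_on A V'" using pd unfolding V'_def pos_def_on_def by blast
    then obtain k u v d' where IH: "\<forall>i<k. u i \<in> V' \<and> v i \<in> V' \<and> d' i > 0"
      "williamson_system A u v d' k" "V' \<subseteq> span (u ` {..<k} \<union> v ` {..<k})"
      using less.hyps split(2,3) unfolding V'_def by blast
    have "williamson_system A (append_seq k u (\<lambda>_. a)) (append_seq k v (\<lambda>_. b))
        (append_seq k d' (\<lambda>_. d)) (k + 1)"
    proof (rule williamson_system_append[OF sym IH(2) W1])
      fix z w assume "z \<in> u ` {..<k} \<union> v ` {..<k}"
        and "w \<in> (\<lambda>_. a) ` {..<1::nat} \<union> (\<lambda>_. b) ` {..<1::nat}"
      then have "z \<in> V'" "w \<in> {a, b}" using IH(1) by auto
      then show "sympl_form z w = 0 \<and> z \<bullet> (A *v w) = 0"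
        using A_orth unfolding V'_def sympl_compl_def by auto
    qed
    moreover have "\<forall>i<k + 1. append_seq k u (\<lambda>_. a) i \<in> V \<and> append_seq k v (\<lambda>_. b) i \<in> V \<and>
        append_seq k d' (\<lambda>_. d) i > 0"
      using IH(1) ab unfolding V'_def append_seq_def by auto
    moreover have "V \<subseteq> span (append_seq k u (\<lambda>_. a) ` {..<k + 1} \<union>
        append_seq k v (\<lambda>_. b) ` {..<k + 1})"
    proof (rule span_append_seq)
      fix w assume "w \<in> V"
      then obtain p where p: "p \<in> V'" "w - p \<in> span {a, b}" using split(1) unfolding V'_def by blast
      have "p \<in> span (u ` {..<k} \<union> v ` {..<k})" using p(1) IH(3) by blast
      moreover have "w - p \<in> span ((\<lambda>_. a) ` {..<1::nat} \<union> (\<lambda>_. b) ` {..<1::nat})"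
        unfolding E by (rule p(2))
      ultimately show "\<exists>p \<in> span (u ` {..<k} \<union> v ` {..<k}).
          w - p \<in> span ((\<lambda>_. a) ` {..<1::nat} \<union> (\<lambda>_. b) ` {..<1::nat})" by blast
    qed
    ultimately show ?thesis by blast
  qed
qed

lemma independent_if_sympl_dual:
  assumes fin: "finite S"
    and dual: "\<And>s. s \<in> S \<Longrightarrow> \<exists>t. sympl_form s t \<noteq> 0 \<and> (\<forall>s'\<in>S. s' \<noteq> s \<longrightarrow> sympl_form s' t = 0)"
  shows "independent S"
proof (rule independent_if_scalars_zero[OF fin])
  fix c w assume sum0: "(\<Sum>x\<in>S. c x *\<^sub>R x) = 0" and w: "w \<in> S"
  obtain t where t: "sympl_form w t \<noteq> 0" "\<forall>s'\<in>S. s' \<noteq> w \<longrightarrow> sympl_form s' t = 0"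
    using dual[OF w] by blast
  have "0 = sympl_form (\<Sum>x\<in>S. c x *\<^sub>R x) t" using sum0 by simp
  also have "\<dots> = (\<Sum>x\<in>S. c x * sympl_form x t)"
    using fin by (simp add: sympl_form_sum_left sympl_form_scaleR_left)
  also have "\<dots> = c w * sympl_form w t"
    using fin w t(2) by (simp add: sum.remove)
  finally show "c w = 0" using t(1) by simp
qed

lemma sympl_system_card:
  assumes sys: "sympl_system u v k"
    and spans: "(UNIV :: ('n::finite) vec2 set) \<subseteq> span (u ` {..<k} \<union> v ` {..<k})"
  shows "k = CARD('n)"
proof -
  let ?S = "u ` {..<k} \<union> v ` {..<k}"
  have rel: "sympl_form (u i) (v j) = (if i = j then 1 else 0)" "sympl_form (u i) (u j) = 0"
    "sympl_form (v i) (v j) = 0" "sympl_form (v j) (u i) = (if i = j then -1 else 0)"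
    if "i < k" "j < k" for i j
    using sys that sympl_form_antisym[of "v j" "u i"] by (auto simp: sympl_system_def)
  have inj_u: "inj_on u {..<k}" and inj_v: "inj_on v {..<k}"
    using rel(1) by (metis inj_onI lessThan_iff zero_neq_one)+
  have disj: "u ` {..<k} \<inter> v ` {..<k} = {}"
    using rel(1,3) by (fastforce simp: image_iff)
  have card: "card ?S = 2 * k"
    using card_Un_disjoint[OF _ _ disj] card_image[OF inj_u] card_image[OF inj_v] by simp
  have "independent ?S"
  proof (rule independent_if_sympl_dual)
    fix s assume "s \<in> ?S"
    then consider i where "i < k" "s = u i" | i where "i < k" "s = v i" by blast
    then show "\<exists>t. sympl_form s t \<noteq> 0 \<and> (\<forall>s'\<in>?S. s' \<noteq> s \<longrightarrow> sympl_form s' t = 0)"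
    proof cases
      case 1
      then show ?thesis using rel by (intro exI[of _ "v i"]) auto
    next
      case 2
      then show ?thesis using rel by (intro exI[of _ "u i"]) auto
    qed
  qed simp
  then have "card ?S = dim (UNIV :: 'n vec2 set)"
    by (intro basis_card_eq_dim[OF _ spans]) simp_all
  then show ?thesis using card by simp
qed

lemma williamson_system_matrix:
  fixes A :: "('n::finite) sqmat"
  assumes sym: "transpose A = A"
    and W: "williamson_system A u v d CARD('n)" and d: "\<And>i. i < CARD('n) \<Longrightarrow> 0 \<le> d i"
  shows "\<exists>M D. symplectic M \<and> (\<forall>i. 0 \<le> D $ i) \<and> transpose M ** A ** M = diag2 D"
proof -
  obtain h :: "'n \<Rightarrow> nat" where h: "bij_betw h UNIV {..<CARD('n)}"
    using ex_bij_betw_finite_nat[of "UNIV :: 'n set"] by (auto simp: atLeast0LessThan)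
  have hk: "h i < CARD('n)" for i using h by (auto dest: bij_betw_apply)
  have heq: "h i = h j \<longleftrightarrow> i = j" for i j using h by (auto simp: bij_betw_def inj_eq)
  have rel: "sympl_form (u (h i)) (v (h j)) = (if i = j then 1 else 0)"
    "sympl_form (v (h j)) (u (h i)) = (if i = j then -1 else 0)"
    "sympl_form (u (h i)) (u (h j)) = 0" "sympl_form (v (h i)) (v (h j)) = 0"
    "u (h i) \<bullet> (A *v v (h j)) = 0" "v (h j) \<bullet> (A *v u (h i)) = 0"
    "u (h i) \<bullet> (A *v u (h j)) = (if i = j then d (h i) else 0)"
    "v (h i) \<bullet> (A *v v (h j)) = (if i = j then d (h i) else 0)" for i j
    using W hk[of i] hk[of j] heq[of i j] sympl_form_antisym[of "v (h j)" "u (h i)"]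
      inner_matrix_vector_symmetric[OF sym, of "v (h j)" "u (h i)"]
    by (auto simp: williamson_system_def sympl_system_def)
  define col where "col a = (case a of Inl i \<Rightarrow> u (h i) | Inr i \<Rightarrow> v (h i))" for a
  define M :: "'n sqmat" where "M = (\<chi> r c. col c $ r)"
  have column_M: "column c M = col c" for c by (simp add: column_def M_def vec_eq_iff)
  have "symplectic M"
    unfolding symplectic_iff_columns column_M
    by (auto simp: col_def J_mat_entry rel split: sum.splits)
  moreover have "transpose M ** A ** M = diag2 (\<chi> i. d (h i))"
    by (auto simp: vec_eq_iff congruence_entry column_M col_def diag2_def rel split: sum.splits)
  moreover have "\<forall>i. 0 \<le> (\<chi> i. d (h i)) $ i" using d hk by simp
  ultimately show ?thesis by blast
qed

text \<open>A symplectic basis is a Williamson system for the identity matrix.\<close>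

lemma sympl_basis_exists:
  assumes "symplectic_subspace W"
  obtains l e f where "\<And>i. i < l \<Longrightarrow> e i \<in> W \<and> f i \<in> W" "sympl_system e f l"
    "W \<subseteq> span (e ` {..<l} \<union> f ` {..<l})"
proof -
  have "pos_def_on (mat 1) W" by (simp add: pos_def_on_def quad_form_def)
  then show thesis
    using williamson_system_exists[of "mat 1" W] assms that williamson_system_sympl_system
    by (metis transpose_mat)
qed

lemma pos_def_on_sympl_compl_kernel:
  assumes psd: "psd_sym A" and ker: "symplectic_subspace (kernel_mat A)"
    and span: "kernel_mat A \<subseteq> span E"
  shows "pos_def_on A (sympl_compl E)"
  unfolding pos_def_on_def
proof (intro ballI impI)
  fix z assume z: "z \<in> sympl_compl E" "z \<noteq> 0"
  show "0 < quad_form A z"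
  proof (rule ccontr)
    assume "\<not> 0 < quad_form A z"
    moreover have "0 \<le> quad_form A z" using psd by (simp add: psd_sym_def quad_form_def)
    ultimately have "z \<in> kernel_mat A"
      using psd_quad_form_zero_imp_kernel[OF psd] by (simp add: kernel_mat_def)
    then obtain w where "w \<in> kernel_mat A" "sympl_form z w \<noteq> 0"
      using ker z(2) by (auto simp: symplectic_subspace_iff)
    moreover have "sympl_form z w = 0" if "w \<in> kernel_mat A" for w
      using sympl_form_vanishes_on_span[of w E z] span that z(1) by (auto simp: sympl_compl_def)
    ultimately show False by blast
  qed
qed

theorem williamson_exists:
  fixes A :: "('n::finite) sqmat"
  assumes psd: "psd_sym A" and ker: "symplectic_subspace (kernel_mat A)"
  shows "\<exists>M D. symplectic M \<and> (\<forall>i. 0 \<le> D $ i) \<and> transpose M ** A ** M = diag2 D"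
proof -
  have sym: "transpose A = A" using psd by (simp add: psd_sym_def)
  obtain l e f where ef: "\<And>i. i < l \<Longrightarrow> e i \<in> kernel_mat A \<and> f i \<in> kernel_mat A"
    and W_sys: "sympl_system e f l" and W_span: "kernel_mat A \<subseteq> span (e ` {..<l} \<union> f ` {..<l})"
    using sympl_basis_exists[OF ker] by blast
  define E where "E = e ` {..<l} \<union> f ` {..<l}"
  have decomp: "\<exists>p \<in> UNIV \<inter> sympl_compl E. z - p \<in> span E" for z
    using sympl_system_decomp[OF W_sys subspace_UNIV] unfolding E_def by blast
  have "symplectic_subspace (sympl_compl E)"
    using symplectic_subspace_inter_sympl_compl[OF symplectic_subspace_UNIV decomp] by simp
  then obtain k u v d where uv: "\<forall>i<k. u i \<in> sympl_compl E \<and> v i \<in> sympl_compl E \<and> d i > 0"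
    and V_sys: "williamson_system A u v d k"
    and V_span: "sympl_compl E \<subseteq> span (u ` {..<k} \<union> v ` {..<k})"
    using williamson_system_exists[OF sym]
      pos_def_on_sympl_compl_kernel[OF psd ker W_span[folded E_def]]
    by blast
  have "williamson_system A e f (\<lambda>_. 0) l"
    using williamson_system_kernel[OF W_sys] ef by (simp add: kernel_mat_def)
  then have full: "williamson_system A (append_seq k u e) (append_seq k v f)
      (append_seq k d (\<lambda>_. 0)) (k + l)"
  proof (rule williamson_system_append[OF sym V_sys])
    fix a b assume a: "a \<in> u ` {..<k} \<union> v ` {..<k}" and b: "b \<in> e ` {..<l} \<union> f ` {..<l}"
    have "a \<in> sympl_compl E" using a uv by auto
    moreover have "b \<in> E" "A *v b = 0" using b ef by (auto simp: E_def kernel_mat_def)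
    ultimately show "sympl_form a b = 0 \<and> a \<bullet> (A *v b) = 0" by (simp add: sympl_compl_def)
  qed
  have "UNIV \<subseteq> span (append_seq k u e ` {..<k + l} \<union> append_seq k v f ` {..<k + l})"
  proof (rule span_append_seq)
    fix w :: "'n vec2"
    obtain p where "p \<in> sympl_compl E" "w - p \<in> span E" using decomp by blast
    then show "\<exists>p \<in> span (u ` {..<k} \<union> v ` {..<k}). w - p \<in> span (e ` {..<l} \<union> f ` {..<l})"
      using V_span unfolding E_def by blast
  qed
  then have "k + l = CARD('n)"
    by (rule sympl_system_card[OF williamson_system_sympl_system[OF full]])
  then have "williamson_system A (append_seq k u e) (append_seq k v f)
      (append_seq k d (\<lambda>_. 0)) CARD('n)"
    using full by simp
  then show ?thesis
    by (rule williamson_system_matrix[OF sym]) (use uv in \<open>simp add: append_seq_def less_imp_le\<close>)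
qed

section \<open>Uniqueness of the symplectic eigenvalues\<close>

lemma diag2_entry:
  "diag2 D $ a $ b = (if a = b then (case a of Inl i \<Rightarrow> D $ i | Inr i \<Rightarrow> D $ i) else 0)"
  unfolding diag2_def by simp

lemma diag2_add: "diag2 (a + b) = diag2 a + diag2 b"
  by (simp add: vec_eq_iff diag2_def split: sum.splits)

lemma diag2_scaleR: "diag2 (c *\<^sub>R a) = c *\<^sub>R diag2 a"
  by (simp add: vec_eq_iff diag2_def split: sum.splits)

lemma diag2_sum: "finite I \<Longrightarrow> diag2 (\<Sum>i\<in>I. f i) = (\<Sum>i\<in>I. diag2 (f i))"
proof (induct I rule: finite_induct)
  case empty
  then show ?case by (simp add: vec_eq_iff diag2_def split: sum.splits)
qed (simp add: diag2_add)

lemma matrix_mul_diag2_right: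
  "(X ** diag2 D) $ a $ b = X $ a $ b * (case b of Inl i \<Rightarrow> D $ i | Inr i \<Rightarrow> D $ i)"
  unfolding matrix_matrix_mult_def diag2_entry by (simp add: if_distrib cong: if_cong)

lemma matrix_mul_diag2_left:
  "(diag2 D ** X) $ a $ b = (case a of Inl i \<Rightarrow> D $ i | Inr i \<Rightarrow> D $ i) * X $ a $ b"
proof -
  have "(diag2 D ** X) $ a $ b = (\<Sum>c\<in>UNIV. diag2 D $ a $ c * X $ c $ b)"
    by (simp add: matrix_matrix_mult_def)
  also have "\<dots> = (\<Sum>c\<in>UNIV.
      if c = a then (case a of Inl i \<Rightarrow> D $ i | Inr i \<Rightarrow> D $ i) * X $ a $ b else 0)"
    by (rule sum.cong) (auto simp: diag2_entry)
  finally show ?thesis by simp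
qed

lemma diag2_mult: "diag2 D ** diag2 E = diag2 (\<chi> i. D $ i * E $ i)"
  by (simp add: vec_eq_iff matrix_mul_diag2_right diag2_entry split: sum.splits)

lemma J_mat_mult_diag2_commute: "J_mat ** diag2 D = diag2 D ** J_mat"
  by (simp add: vec_eq_iff matrix_mul_diag2_right matrix_mul_diag2_left J_mat_entry
      split: sum.splits)

lemma det_char_diag2: "det (x *\<^sub>R mat 1 - diag2 E) = (\<Prod>i\<in>UNIV. x - E $ i)\<^sup>2"
proof -
  have "det (x *\<^sub>R mat 1 - diag2 E) = (\<Prod>a\<in>UNIV. (x *\<^sub>R mat 1 - diag2 E) $ a $ a)"
    by (rule det_diagonal) (simp add: diag2_entry mat_def)
  also have "\<dots> = (\<Prod>i\<in>UNIV. x - E $ i) * (\<Prod>i\<in>UNIV. x - E $ i)"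
    by (simp add: UNIV_Plus_UNIV[symmetric] prod.Plus diag2_entry mat_def del: UNIV_Plus_UNIV)
  finally show ?thesis by (simp add: power2_eq_square)
qed

lemma det_char_similar:
  fixes P Q X :: "real^'n::finite^'n"
  assumes PQ: "P ** Q = mat 1"
  shows "det (x *\<^sub>R mat 1 - P ** X ** Q) = det (x *\<^sub>R mat 1 - X)"
proof -
  have "x *\<^sub>R mat 1 - P ** X ** Q = P ** (x *\<^sub>R mat 1 - X) ** Q"
    using PQ by (simp add: matrix_diff_ldistrib matrix_diff_rdistrib matrix_scalar_ac
        scalar_matrix_assoc[symmetric])
  moreover have "det P * det Q = 1" using PQ det_mul[of P Q] by simp
  ultimately show ?thesis by (simp add: det_mul)
qed

lemma image_mset_eq_if_char_poly_sq_eq: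
  fixes E1 E2 :: "real ^ ('n::finite)"
  assumes "\<And>x. (\<Prod>i\<in>UNIV. x - E1 $ i)\<^sup>2 = (\<Prod>i\<in>UNIV. x - E2 $ i)\<^sup>2"
  shows "image_mset (\<lambda>i. E1 $ i) (mset_set UNIV) = image_mset (\<lambda>i. E2 $ i) (mset_set UNIV)"
proof -
  define p where "p E = (\<Prod>i\<in>(UNIV::'n set). [:- (E $ i), 1:])" for E :: "real^'n"
  have "poly (p E) x = (\<Prod>i\<in>UNIV. x - E $ i)" for E x
    by (simp add: p_def poly_prod)
  then have "poly (p E1 ^ 2) = poly (p E2 ^ 2)" using assms by (simp add: fun_eq_iff)
  then have "proots (p E1 ^ 2) = proots (p E2 ^ 2)" by (simp add: poly_eq_poly_eq_iff)
  moreover have "proots (p E) = image_mset (\<lambda>i. E $ i) (mset_set UNIV)" for E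
  proof -
    have "proots (p E) = (\<Sum>i\<in>UNIV. {#E $ i#})"
      unfolding p_def by (subst proots_prod) simp_all
    also have "\<dots> = image_mset (\<lambda>i. E $ i) (mset_set UNIV)"
      by (simp add: sum_unfold_sum_mset)
    finally show ?thesis .
  qed
  ultimately show ?thesis by (simp add: proots_power repeat_mset_cancel1)
qed

text \<open>For symplectic \<open>N\<close> the congruence \<open>N\<^sup>T D\<^sub>1 N = D\<^sub>2\<close> turns into the similarity
  \<open>N\<^sup>-\<^sup>1 (J D\<^sub>1) N = J D\<^sub>2\<close>, and \<open>(J D)\<^sup>2 = - D\<^sup>2\<close>.\<close>

lemma symplectic_congruence_diag2_similar_sq:
  assumes sN: "symplectic N" and tN: "transpose N ** diag2 D1 ** N = diag2 D2"
  shows "sympl_inv N ** diag2 (\<chi> i. D1 $ i * D1 $ i) ** N = diag2 (\<chi> i. D2 $ i * D2 $ i)"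
proof -
  have sq: "(J_mat ** diag2 D) ** (J_mat ** diag2 D) = - diag2 (\<chi> i. D $ i * D $ i)" for D
  proof -
    have "(J_mat ** diag2 D) ** (J_mat ** diag2 D) = J_mat ** (diag2 D ** J_mat) ** diag2 D"
      by (simp add: matrix_mul_assoc)
    also have "\<dots> = (J_mat ** J_mat) ** (diag2 D ** diag2 D)"
      by (simp add: J_mat_mult_diag2_commute[symmetric] matrix_mul_assoc)
    finally show ?thesis by (simp add: J_mat_mult_J_mat matrix_mul_uminus_left diag2_mult)
  qed
  define Y1 where "Y1 = J_mat ** diag2 D1"
  have "J_mat ** diag2 D2 = (J_mat ** transpose N) ** diag2 D1 ** N"
    unfolding tN[symmetric] by (simp add: matrix_mul_assoc)
  then have Y2: "J_mat ** diag2 D2 = sympl_inv N ** Y1 ** N"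
    unfolding Y1_def by (simp add: J_mat_mult_transpose_symplectic[OF sN] matrix_mul_assoc)
  have "- diag2 (\<chi> i. D2 $ i * D2 $ i) = sympl_inv N ** Y1 ** (N ** sympl_inv N) ** Y1 ** N"
    unfolding sq[symmetric] Y2 by (simp add: matrix_mul_assoc)
  also have "\<dots> = sympl_inv N ** (- diag2 (\<chi> i. D1 $ i * D1 $ i)) ** N"
    by (simp add: sympl_inv_right[OF sN] matrix_mul_assoc sq[symmetric] Y1_def)
  finally show ?thesis by (simp add: matrix_mul_uminus_left matrix_mul_uminus_right)
qed

theorem williamson_unique:
  fixes A :: "('n::finite) sqmat"
  assumes s1: "symplectic M1" and s2: "symplectic M2"
    and e1: "transpose M1 ** A ** M1 = diag2 D1" and e2: "transpose M2 ** A ** M2 = diag2 D2"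
    and p1: "\<forall>i. 0 \<le> D1 $ i" and p2: "\<forall>i. 0 \<le> D2 $ i"
  shows "sorted_entries D1 = sorted_entries D2"
proof -
  define N where "N = sympl_inv M1 ** M2"
  have sN: "symplectic N" unfolding N_def by (intro symplectic_mult symplectic_sympl_inv s1 s2)
  have "transpose N ** diag2 D1 ** N
      = transpose M2 ** (transpose (M1 ** sympl_inv M1) ** A ** (M1 ** sympl_inv M1)) ** M2"
    unfolding N_def e1[symmetric] by (simp add: matrix_transpose_mul matrix_mul_assoc)
  also have "\<dots> = diag2 D2" using e2 by (simp add: sympl_inv_right[OF s1])
  finally have sim:
      "sympl_inv N ** diag2 (\<chi> i. D1 $ i * D1 $ i) ** N = diag2 (\<chi> i. D2 $ i * D2 $ i)"
    by (rule symplectic_congruence_diag2_similar_sq[OF sN])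
  have "(\<Prod>i\<in>UNIV. x - D1 $ i * D1 $ i)\<^sup>2 = (\<Prod>i\<in>UNIV. x - D2 $ i * D2 $ i)\<^sup>2" for x
    using det_char_similar[OF sympl_inv_left[OF sN], of x "diag2 (\<chi> i. D1 $ i * D1 $ i)"]
    unfolding sim det_char_diag2 by simp
  then have "image_mset (\<lambda>i. D1 $ i * D1 $ i) (mset_set UNIV)
      = image_mset (\<lambda>i. D2 $ i * D2 $ i) (mset_set UNIV)"
    using image_mset_eq_if_char_poly_sq_eq[of "\<chi> i. D1 $ i * D1 $ i" "\<chi> i. D2 $ i * D2 $ i"] by simp
  then have "image_mset sqrt (image_mset (\<lambda>i. D1 $ i * D1 $ i) (mset_set UNIV))
      = image_mset sqrt (image_mset (\<lambda>i. D2 $ i * D2 $ i) (mset_set UNIV))" by simp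
  then have "image_mset (\<lambda>i. D1 $ i) (mset_set UNIV) = image_mset (\<lambda>i. D2 $ i) (mset_set UNIV)"
    using p1 p2 by (simp add: multiset.map_comp o_def real_sqrt_mult_self)
  then show ?thesis unfolding sorted_entries_def by simp
qed

lemma sympl_eigs_eq:
  assumes "symplectic M" "\<forall>i. 0 \<le> D $ i" "transpose M ** A ** M = diag2 D"
  shows "sympl_eigs A = sorted_entries D"
  unfolding sympl_eigs_def
proof (rule the_equality)
  show "\<exists>M' D'. symplectic M' \<and> (\<forall>i. 0 \<le> D' $ i) \<and> transpose M' ** A ** M' = diag2 D' \<and>
      sorted_entries D = sorted_entries D'"
    using assms by blast
next
  fix L assume "\<exists>M' D'. symplectic M' \<and> (\<forall>i. 0 \<le> D' $ i) \<and> transpose M' ** A ** M' = diag2 D' \<and>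
      L = sorted_entries D'"
  then show "L = sorted_entries D" using williamson_unique[OF assms(1) _ assms(3)] assms(2) by metis
qed

lemma williamson_normal_form:
  assumes "psd_sym A" "symplectic_subspace (kernel_mat A)"
  obtains M D where "symplectic M" "transpose M ** A ** M = diag2 D"
    "sympl_eigs A = sorted_entries D"
  using williamson_exists[OF assms] sympl_eigs_eq by metis

section \<open>Majorization\<close>

lemma sorted_sorted_entries: "sorted (sorted_entries D)"
  unfolding sorted_entries_def by (rule sorted_sorted_list_of_multiset)

lemma mset_sorted_entries: "mset (sorted_entries D) = image_mset (\<lambda>i. D $ i) (mset_set UNIV)"
  unfolding sorted_entries_def by (rule mset_sorted_list_of_multiset)

lemma length_sorted_entries: "length (sorted_entries (D :: real ^ ('n::finite))) = CARD('n)"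
  by (metis mset_sorted_entries size_image_mset size_mset size_mset_set)

lemma sorted_entries_enumeration:
  fixes D :: "real ^ ('n::finite)"
  obtains \<beta> where "bij_betw \<beta> {..<CARD('n)} (UNIV::'n set)"
    "\<And>k. k < CARD('n) \<Longrightarrow> D $ (\<beta> k) = sorted_entries D ! k"
proof -
  let ?L = "sorted_entries D"
  obtain es :: "'n list" where es: "set es = UNIV" "distinct es"
    using finite_distinct_list[of "UNIV :: 'n set"] by auto
  have les: "length es = CARD('n)" using es distinct_card by fastforce
  have "mset ?L = mset (map (\<lambda>i. D $ i) es)"
    using es by (simp add: mset_sorted_entries mset_set_set[symmetric])
  then obtain p where p: "p permutes {..<length (map (\<lambda>i. D $ i) es)}"
    "permute_list p (map (\<lambda>i. D $ i) es) = ?L"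
    by (rule mset_eq_permutation)
  have p': "p permutes {..<CARD('n)}" using p(1) les by simp
  show ?thesis
  proof
    show "bij_betw ((!) es \<circ> p) {..<CARD('n)} UNIV"
      by (rule bij_betw_trans[OF permutes_imp_bij[OF p']]) (rule bij_betw_nth, use es les in auto)
    fix k assume k: "k < CARD('n)"
    have "?L ! k = permute_list p (map (\<lambda>i. D $ i) es) ! k" using p(2) by simp
    also have "\<dots> = map (\<lambda>i. D $ i) es ! p k" using p(1) k les by (simp add: permute_list_nth)
    finally have "?L ! k = map (\<lambda>i. D $ i) es ! p k" .
    then show "D $ ((!) es \<circ> p) k = ?L ! k"
      using permutes_in_image[OF p'] k les by simp
  qed
qed

lemma sum_prefix_le_sum_sorted:
  fixes L :: "real list"
  assumes srt: "sorted L" and K: "K \<subseteq> {..<length L}"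
  shows "(\<Sum>k<card K. L ! k) \<le> (\<Sum>k\<in>K. L ! k)"
proof (cases "K = {}")
  case False
  define m where "m = card K"
  have fK: "finite K" using K finite_subset by blast
  then have m: "0 < m" "m \<le> length L" unfolding m_def using False card_mono[OF _ K] by auto
  define A where "A = K - {..<m}"
  define B where "B = {..<m} - K"
  have "card K = card (K \<inter> {..<m}) + card A" "m = card ({..<m} \<inter> K) + card B"
    unfolding A_def B_def using fK by (metis card_Int_Diff finite_lessThan card_lessThan)+
  then have cAB: "card A = card B" unfolding m_def by (simp add: Int_commute)
  define t where "t = L ! (m - 1)"
  have "(\<Sum>k\<in>B. L ! k) \<le> of_nat (card B) * t"
    by (rule sum_bounded_above) (use srt m in \<open>auto simp: B_def t_def intro!: sorted_nth_mono\<close>)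
  also have "\<dots> = of_nat (card A) * t" using cAB by simp
  also have "\<dots> \<le> (\<Sum>k\<in>A. L ! k)"
    by (rule sum_bounded_below) (use srt K m in \<open>auto simp: A_def t_def intro!: sorted_nth_mono\<close>)
  finally have "(\<Sum>k\<in>B. L ! k) \<le> (\<Sum>k\<in>A. L ! k)" .
  moreover have "(\<Sum>k\<in>K. L ! k) = (\<Sum>k\<in>K \<inter> {..<m}. L ! k) + (\<Sum>k\<in>A. L ! k)"
    "(\<Sum>k<m. L ! k) = (\<Sum>k\<in>{..<m} \<inter> K. L ! k) + (\<Sum>k\<in>B. L ! k)"
    unfolding A_def B_def using fK by (simp_all add: sum.Int_Diff)
  ultimately show ?thesis unfolding m_def by (simp add: Int_commute)
qed simp

lemma majorized_sorted_entries_subset_sums: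
  fixes DA DB :: "real ^ ('n::finite)"
  assumes maj: "majorized (sorted_entries DA) (sorted_entries DB)"
  shows "\<forall>U. \<exists>V. card V = card U \<and> (\<Sum>i\<in>V. DB $ i) \<le> (\<Sum>i\<in>U. DA $ i)"
    and "(\<Sum>i\<in>UNIV. DB $ i) = (\<Sum>i\<in>UNIV. DA $ i)"
proof -
  let ?LA = "sorted_entries DA" and ?LB = "sorted_entries DB"
  have sum_list_sorted_entries: "sum_list (sorted_entries D) = (\<Sum>i\<in>UNIV. D $ i)" for D :: "real^'n"
    by (simp add: sum_mset_sum_list[symmetric] mset_sorted_entries sum_unfold_sum_mset)
  show "(\<Sum>i\<in>UNIV. DB $ i) = (\<Sum>i\<in>UNIV. DA $ i)"
    using maj unfolding majorized_def sum_list_sorted_entries by simp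
  have prefix: "(\<Sum>k<m. ?LB ! k) \<le> (\<Sum>k<m. ?LA ! k)" if "m \<le> CARD('n)" for m
  proof (cases "m = 0")
    case False
    then have "sum_list (take m ?LB) \<le> sum_list (take m ?LA)"
      using maj that
      by (simp add: majorized_def length_sorted_entries sorted_sort_id sorted_sorted_entries)
    moreover have "sum_list (take m L) = (\<Sum>k<m. L ! k)" if "m \<le> length L" for L :: "real list"
      using that by (simp add: sum_list_sum_nth atLeast0LessThan min_def)
    ultimately show ?thesis using that by (simp add: length_sorted_entries)
  qed simp
  obtain \<beta>A where bA: "bij_betw \<beta>A {..<CARD('n)} (UNIV::'n set)"
    "\<And>k. k < CARD('n) \<Longrightarrow> DA $ (\<beta>A k) = ?LA ! k"
    using sorted_entries_enumeration[of DA] by blast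
  obtain \<beta>B where bB: "bij_betw \<beta>B {..<CARD('n)} (UNIV::'n set)"
    "\<And>k. k < CARD('n) \<Longrightarrow> DB $ (\<beta>B k) = ?LB ! k"
    using sorted_entries_enumeration[of DB] by blast
  show "\<forall>U. \<exists>V. card V = card U \<and> (\<Sum>i\<in>V. DB $ i) \<le> (\<Sum>i\<in>U. DA $ i)"
  proof
    fix U :: "'n set"
    define m where "m = card U"
    have mn: "m \<le> CARD('n)" unfolding m_def by (simp add: card_mono)
    define K where "K = {k\<in>{..<CARD('n)}. \<beta>A k \<in> U}"
    have bK: "bij_betw \<beta>A K U"
      by (rule bij_betw_subset[OF bA(1)]) (use bA(1) in \<open>auto simp: K_def bij_betw_def\<close>)
    have "(\<Sum>i\<in>U. DA $ i) = (\<Sum>k\<in>K. ?LA ! k)"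
      using sum.reindex_bij_betw[OF bK, of "\<lambda>i. DA $ i"] bA(2) by (simp add: K_def)
    moreover have "(\<Sum>k<m. ?LA ! k) \<le> (\<Sum>k\<in>K. ?LA ! k)"
      using sum_prefix_le_sum_sorted[OF sorted_sorted_entries, of K DA] bij_betw_same_card[OF bK]
      by (auto simp: K_def m_def length_sorted_entries)
    moreover define V where "V = \<beta>B ` {..<m}"
    have bV: "bij_betw \<beta>B {..<m} V"
      unfolding V_def by (rule bij_betw_subset[OF bB(1)]) (use mn in auto)
    then have "(\<Sum>i\<in>V. DB $ i) = (\<Sum>k<m. ?LB ! k)"
      using sum.reindex_bij_betw[OF bV, of "\<lambda>i. DB $ i"] bB(2) mn by simp
    ultimately have "(\<Sum>i\<in>V. DB $ i) \<le> (\<Sum>i\<in>U. DA $ i)" using prefix[OF mn] by linarith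
    moreover have "card V = card U" using bij_betw_same_card[OF bV] unfolding m_def by simp
    ultimately show "\<exists>V. card V = card U \<and> (\<Sum>i\<in>V. DB $ i) \<le> (\<Sum>i\<in>U. DA $ i)" by blast
  qed
qed

lemma exists_subset_avoiding_max:
  fixes y :: "'a \<Rightarrow> real"
  assumes fin: "finite T" and V: "V \<subseteq> T" "card V < card T"
    and j0: "j0 \<in> T" "\<And>j. j \<in> T \<Longrightarrow> y j \<le> y j0"
  shows "\<exists>V' \<subseteq> T - {j0}. card V' = card V \<and> sum y V' \<le> sum y V"
proof (cases "j0 \<in> V")
  case True
  have "V \<noteq> T" using V(2) by auto
  then obtain j1 where j1: "j1 \<in> T" "j1 \<notin> V" using V(1) by blast
  have fV: "finite V" using V(1) fin finite_subset by blast
  define V' where "V' = insert j1 (V - {j0})"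
  have "0 < card V" using True fV by (auto simp: card_gt_0_iff)
  then have "card V' = card V"
    unfolding V'_def using j1 True fV by (simp add: card_Diff_singleton)
  moreover have "sum y V' \<le> sum y V"
    unfolding V'_def using j1 True fV j0(2)[OF j1(1)] by (simp add: sum_diff1)
  moreover have "V' \<subseteq> T - {j0}" unfolding V'_def using j1 V(1) True by auto
  ultimately show ?thesis by blast
qed (use V in blast)

lemma subset_sums_le_remove:
  fixes x y :: "'a \<Rightarrow> real"
  assumes fS: "finite S" and fT: "finite T" and cST: "card S = card T"
    and maj: "\<forall>U\<subseteq>S. \<exists>V\<subseteq>T. card V = card U \<and> sum y V \<le> sum x U"
    and i0: "i0 \<in> S" and j0: "j0 \<in> T" "\<And>j. j \<in> T \<Longrightarrow> y j \<le> y j0"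
  shows "\<forall>U\<subseteq>S - {i0}. \<exists>V\<subseteq>T - {j0}. card V = card U \<and> sum y V \<le> sum x U"
proof (intro allI impI)
  fix U assume U: "U \<subseteq> S - {i0}"
  then obtain V where V: "V \<subseteq> T" "card V = card U" "sum y V \<le> sum x U"
    using maj by blast
  have "card U \<le> card (S - {i0})" using U fS by (simp add: card_mono)
  then have "card U < card S" using fS i0 card_Diff1_less[OF fS i0] by linarith
  then have "card V < card T" using V(2) cST by simp
  then obtain V' where "V' \<subseteq> T - {j0}" "card V' = card V" "sum y V' \<le> sum y V"
    using exists_subset_avoiding_max[where y = y, OF fT V(1) _ j0(1)] j0(2) by blast
  then show "\<exists>V\<subseteq>T - {j0}. card V = card U \<and> sum y V \<le> sum x U"
    using V by (intro exI[of _ V']) simp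
qed

lemma bij_betw_fun_upd_insert:
  assumes "bij_betw f S T" "i \<notin> S" "j \<notin> T"
  shows "bij_betw (f(i := j)) (insert i S) (insert j T)"
proof -
  have "bij_betw (f(i := j)) S T = bij_betw f S T"
    using assms(2) by (intro bij_betw_cong) auto
  moreover have "bij_betw (f(i := j)) {i} {j}" by (simp add: bij_betw_def)
  ultimately have "bij_betw (f(i := j)) (S \<union> {i}) (T \<union> {j})"
    using assms by (intro bij_betw_combine) auto
  then show ?thesis by simp
qed

lemma sum_insert_shift_weights:
  fixes c z :: "'a \<Rightarrow> real"
  assumes "finite S" "i \<notin> S"
  shows "(\<Sum>k\<in>insert i S. c k * z k) = c i * (\<Sum>k\<in>insert i S. z k) + (\<Sum>k\<in>S. (c k - c i) * z k)"
  using assms by (simp add: algebra_simps sum_distrib_left sum_subtractf)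

text \<open>A rearrangement inequality: match the index of least weight with the largest value of \<open>y\<close>,
  and proceed by induction with the weights lowered by that least weight.\<close>

lemma exists_bij_betw_weighted_sum_le:
  fixes x y c :: "'a \<Rightarrow> real"
  assumes "finite S" "finite T" "card S = card T"
    and "\<forall>U\<subseteq>S. \<exists>V\<subseteq>T. card V = card U \<and> sum y V \<le> sum x U"
    and "\<forall>i\<in>S. 0 \<le> c i"
  shows "\<exists>\<pi>. bij_betw \<pi> S T \<and> (\<Sum>i\<in>S. c i * y (\<pi> i)) \<le> (\<Sum>i\<in>S. c i * x i)"
  using assms
proof (induction "card S" arbitrary: S T c rule: less_induct)
  case less
  note fS = less.prems(1) and fT = less.prems(2) and cST = less.prems(3) and maj = less.prems(4)
    and c0 = less.prems(5)
  show ?case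
  proof (cases "S = {}")
    case True
    then show ?thesis using cST fT by (auto intro!: exI[of _ id])
  next
    case False
    then have Tne: "T \<noteq> {}" using cST fS fT by auto
    define i0 where "i0 = arg_min_on c S"
    have i0: "i0 \<in> S" "\<And>i. i \<in> S \<Longrightarrow> c i0 \<le> c i"
      unfolding i0_def using arg_min_if_finite(1)[OF fS False] arg_min_least[OF fS False] by auto
    define j0 where "j0 = arg_min_on (\<lambda>j. - y j) T"
    have j0: "j0 \<in> T" "\<And>j. j \<in> T \<Longrightarrow> y j \<le> y j0"
      unfolding j0_def
      using arg_min_if_finite(1)[OF fT Tne] arg_min_least[OF fT Tne, of _ "\<lambda>j. - y j"] by auto
    define S' where "S' = S - {i0}"
    define T' where "T' = T - {j0}"
    have SS: "S = insert i0 S'" "i0 \<notin> S'" "finite S'" and TT: "T = insert j0 T'" "j0 \<notin> T'"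
      using i0 j0 fS unfolding S'_def T'_def by auto
    have lt: "card S' < card S" and eq: "card S' = card T'" and fT': "finite T'"
      using SS TT fT cST by (simp_all add: card_insert_if)
    have maj': "\<forall>U\<subseteq>S'. \<exists>V\<subseteq>T'. card V = card U \<and> sum y V \<le> sum x U"
      using subset_sums_le_remove[where y = y, OF fS fT cST maj i0(1) j0] unfolding S'_def T'_def .
    have c'0: "\<forall>i\<in>S'. 0 \<le> c i - c i0" using i0(2) unfolding S'_def by auto
    obtain \<pi>' where \<pi>': "bij_betw \<pi>' S' T'"
      "(\<Sum>i\<in>S'. (c i - c i0) * y (\<pi>' i)) \<le> (\<Sum>i\<in>S'. (c i - c i0) * x i)"
      using less.hyps[OF lt SS(3) fT' eq maj' c'0] by blast
    define \<pi> where "\<pi> = \<pi>'(i0 := j0)"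
    have bij: "bij_betw \<pi> S T"
      unfolding \<pi>_def SS(1) TT(1) using bij_betw_fun_upd_insert[OF \<pi>'(1) SS(2) TT(2)] .
    have cong: "(\<Sum>i\<in>S'. (c i - c i0) * y (\<pi> i)) = (\<Sum>i\<in>S'. (c i - c i0) * y (\<pi>' i))"
      using SS(2) unfolding \<pi>_def by (intro sum.cong) auto
    have reindex: "(\<Sum>i\<in>S. y (\<pi> i)) = sum y T" using sum.reindex_bij_betw[OF bij] .
    have "(\<Sum>i\<in>S. c i * y (\<pi> i)) = c i0 * sum y T + (\<Sum>i\<in>S'. (c i - c i0) * y (\<pi>' i))"
      using sum_insert_shift_weights[OF SS(3,2), of c "\<lambda>i. y (\<pi> i)"]
      unfolding SS(1)[symmetric] reindex cong .
    moreover have "(\<Sum>i\<in>S. c i * x i) = c i0 * sum x S + (\<Sum>i\<in>S'. (c i - c i0) * x i)"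
      using sum_insert_shift_weights[OF SS(3,2), of c x] unfolding SS(1)[symmetric] .
    moreover obtain V where "V \<subseteq> T" "card V = card S" "sum y V \<le> sum x S" using maj by blast
    then have "sum y T \<le> sum x S" using card_subset_eq[OF fT] cST by metis
    then have "c i0 * sum y T \<le> c i0 * sum x S" using c0 i0(1) by (simp add: mult_left_mono)
    ultimately show ?thesis using bij \<pi>'(2) by (intro exI[of _ \<pi>]) linarith
  qed
qed

lemma exists_permutation_weighted_sum_le:
  fixes x y c :: "('n::finite) \<Rightarrow> real"
  assumes maj: "\<forall>U. \<exists>V. card V = card U \<and> sum y V \<le> sum x U" and tot: "sum y UNIV = sum x UNIV"
  shows "\<exists>\<pi>. \<pi> permutes UNIV \<and> (\<Sum>i\<in>UNIV. c i * y (\<pi> i)) \<le> (\<Sum>i\<in>UNIV. c i * x i)"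
proof -
  define m where "m = Min (range c)"
  define c' where "c' i = c i - m" for i
  have "\<forall>i\<in>UNIV. 0 \<le> c' i" unfolding c'_def m_def by simp
  then obtain \<pi> where \<pi>: "bij_betw \<pi> UNIV UNIV" "(\<Sum>i\<in>UNIV. c' i * y (\<pi> i)) \<le> (\<Sum>i\<in>UNIV. c' i * x i)"
    using exists_bij_betw_weighted_sum_le[of UNIV UNIV y x c'] maj by auto
  have "(\<Sum>i\<in>UNIV. y (\<pi> i)) = sum y UNIV" using sum.reindex_bij_betw[OF \<pi>(1)] .
  then have "(\<Sum>i\<in>UNIV. c i * y (\<pi> i)) = (\<Sum>i\<in>UNIV. c' i * y (\<pi> i)) + m * sum x UNIV"
    unfolding c'_def tot[symmetric]
    by (simp add: algebra_simps sum.distrib sum_distrib_left[symmetric] sum_subtractf)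
  also have "\<dots> \<le> (\<Sum>i\<in>UNIV. c' i * x i) + m * sum x UNIV" using \<pi>(2) by simp
  also have "\<dots> = (\<Sum>i\<in>UNIV. c i * x i)"
    unfolding c'_def by (simp add: algebra_simps sum.distrib sum_distrib_left sum_subtractf)
  finally show ?thesis using bij_imp_permutes[OF \<pi>(1)] by blast
qed

text \<open>Rado's theorem, by separation: a hyperplane separating \<open>x\<close> from the hull is violated by
  the permutation of \<open>y\<close> given by the rearrangement inequality.\<close>

lemma in_convex_hull_permutations:
  fixes x y :: "('n::finite) \<Rightarrow> real"
  assumes maj: "\<forall>U. \<exists>V. card V = card U \<and> sum y V \<le> sum x U" and tot: "sum y UNIV = sum x UNIV"
  shows "(\<chi> i. x i) \<in> convex hull ((\<lambda>\<pi>. \<chi> i. y (\<pi> i)) ` {\<pi>. \<pi> permutes (UNIV::'n set)})"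
proof (rule ccontr)
  let ?P = "(\<lambda>\<pi>. \<chi> i. y (\<pi> i)) ` {\<pi>. \<pi> permutes (UNIV::'n set)}"
  assume nin: "(\<chi> i. x i) \<notin> convex hull ?P"
  have "finite ?P" using finite_permutations[of "UNIV :: 'n set"] by simp
  then have "closed (convex hull ?P)"
    by (simp add: compact_imp_closed finite_imp_compact_convex_hull)
  then obtain a b where ab: "a \<bullet> (\<chi> i. x i) < b" "\<forall>z\<in>convex hull ?P. b < a \<bullet> z"
    using separating_hyperplane_closed_point[OF convex_convex_hull _ nin] by blast
  obtain \<pi> where \<pi>: "\<pi> permutes UNIV" "(\<Sum>i\<in>UNIV. a $ i * y (\<pi> i)) \<le> (\<Sum>i\<in>UNIV. a $ i * x i)"
    using exists_permutation_weighted_sum_le[OF maj tot, of "\<lambda>i. a $ i"] by blast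
  have "(\<chi> i. y (\<pi> i)) \<in> convex hull ?P" using \<pi>(1) by (intro hull_inc) auto
  then have "b < a \<bullet> (\<chi> i. y (\<pi> i))" using ab(2) by blast
  also have "\<dots> \<le> a \<bullet> (\<chi> i. x i)" using \<pi>(2) by (simp add: inner_vec_def)
  finally show False using ab(1) by simp
qed

lemma convex_hull_finite_image_weights:
  assumes fI: "finite I" and v: "v \<in> convex hull (g ` I)"
  shows "\<exists>p. (\<forall>i\<in>I. 0 \<le> p i) \<and> sum p I = 1 \<and> v = (\<Sum>i\<in>I. p i *\<^sub>R g i)"
proof -
  have "g ` I = \<Union> ((\<lambda>i. {g i}) ` I)" by auto
  then have "v \<in> {\<Sum>i\<in>I. c i *\<^sub>R s i |c s. (\<forall>i\<in>I. 0 \<le> c i) \<and> sum c I = 1 \<and> (\<forall>i\<in>I. s i \<in> {g i})}"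
    using v by (simp add: convex_hull_finite_union[OF fI])
  then obtain c s where "v = (\<Sum>i\<in>I. c i *\<^sub>R s i)" "\<forall>i\<in>I. 0 \<le> c i" "sum c I = 1" "\<forall>i\<in>I. s i = g i"
    by blast
  then show ?thesis by (intro exI[of _ c]) simp
qed

definition perm_mat :: "(('n::finite) \<Rightarrow> 'n) \<Rightarrow> 'n sqmat" where
  "perm_mat \<pi> = (\<chi> a b. if a = map_sum \<pi> \<pi> b then 1 else 0)"

lemma perm_mat_congruence:
  "(transpose (perm_mat \<pi>) ** X ** perm_mat \<pi>) $ a $ b = X $ map_sum \<pi> \<pi> a $ map_sum \<pi> \<pi> b"
proof -
  have col: "column c (perm_mat \<pi>) = axis (map_sum \<pi> \<pi> c) 1" for c
    by (simp add: vec_eq_iff column_def perm_mat_def axis_def)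
  show ?thesis unfolding congruence_entry col matrix_vector_mult_basis
    by (simp add: inner_commute[of "axis _ _"] inner_axis column_def)
qed

lemma symplectic_perm_mat: assumes "\<pi> permutes UNIV" shows "symplectic (perm_mat \<pi>)"
proof -
  have "J_mat $ map_sum \<pi> \<pi> a $ map_sum \<pi> \<pi> b = J_mat $ a $ b" for a b :: "'a + 'a"
    using permutes_inj[OF assms] by (cases a; cases b) (auto simp: J_mat_entry inj_eq)
  then show ?thesis unfolding symplectic_def by (simp add: vec_eq_iff perm_mat_congruence)
qed

lemma perm_mat_diag2:
  assumes "\<pi> permutes UNIV"
  shows "transpose (perm_mat \<pi>) ** diag2 D ** perm_mat \<pi> = diag2 (\<chi> i. D $ \<pi> i)"
proof -
  have "diag2 D $ map_sum \<pi> \<pi> a $ map_sum \<pi> \<pi> b = diag2 (\<chi> i. D $ \<pi> i) $ a $ b" for a b :: "'a + 'a"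
    using permutes_inj[OF assms] by (cases a; cases b) (auto simp: diag2_def inj_eq)
  then show ?thesis by (simp add: vec_eq_iff perm_mat_congruence)
qed

lemma diag2_majorized_convex_combination:
  fixes DA DB :: "real ^ ('n::finite)"
  assumes "majorized (sorted_entries DA) (sorted_entries DB)"
  shows "\<exists>p. (\<forall>\<pi>\<in>{\<pi>. \<pi> permutes UNIV}. 0 \<le> p \<pi>) \<and> (\<Sum>\<pi>\<in>{\<pi>. \<pi> permutes UNIV}. p \<pi>) = 1 \<and>
    diag2 DA = (\<Sum>\<pi>\<in>{\<pi>. \<pi> permutes UNIV}. p \<pi> *\<^sub>R (transpose (perm_mat \<pi>) ** diag2 DB ** perm_mat \<pi>))"
proof -
  let ?P = "{\<pi>. \<pi> permutes (UNIV :: 'n set)}"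
  have fP: "finite ?P" using finite_permutations[of "UNIV :: 'n set"] by simp
  have "(\<chi> i. DA $ i) \<in> convex hull ((\<lambda>\<pi>. \<chi> i. DB $ (\<pi> i)) ` ?P)"
    using majorized_sorted_entries_subset_sums[OF assms]
    by (intro in_convex_hull_permutations[of "\<lambda>i. DB $ i" "\<lambda>i. DA $ i"]) auto
  then obtain p where p: "\<forall>\<pi>\<in>?P. 0 \<le> p \<pi>" "sum p ?P = 1"
    "DA = (\<Sum>\<pi>\<in>?P. p \<pi> *\<^sub>R (\<chi> i. DB $ (\<pi> i)))"
    using convex_hull_finite_image_weights[OF fP] by auto
  have "diag2 DA = (\<Sum>\<pi>\<in>?P. p \<pi> *\<^sub>R diag2 (\<chi> i. DB $ (\<pi> i)))"
    using p(3) fP by (simp add: diag2_sum diag2_scaleR)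
  also have "\<dots> = (\<Sum>\<pi>\<in>?P. p \<pi> *\<^sub>R (transpose (perm_mat \<pi>) ** diag2 DB ** perm_mat \<pi>))"
    by (rule sum.cong) (auto simp: perm_mat_diag2)
  finally show ?thesis using p(1,2) by blast
qed

theorem theorem3p1:
  fixes A B :: "('n::finite) sqmat"
  assumes "psd_sym A" and "psd_sym B"
    and "symplectic_subspace (kernel_mat A)" and "symplectic_subspace (kernel_mat B)"
    and "majorized (sympl_eigs A) (sympl_eigs B)"
  shows "(\<exists>(M :: ('n \<Rightarrow> 'n) \<Rightarrow> 'n sqmat) (p :: ('n \<Rightarrow> 'n) \<Rightarrow> real).
           (\<forall>\<pi>\<in>{\<pi>. \<pi> permutes (UNIV :: 'n set)}. symplectic (M \<pi>) \<and> 0 \<le> p \<pi>) \<and>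
           (\<Sum>\<pi>\<in>{\<pi>. \<pi> permutes (UNIV :: 'n set)}. p \<pi>) = 1 \<and>
           A = (\<Sum>\<pi>\<in>{\<pi>. \<pi> permutes (UNIV :: 'n set)}. p \<pi> *\<^sub>R (transpose (M \<pi>) ** B ** M \<pi>))) \<and>
         A \<in> convex hull {transpose M ** B ** M | M. symplectic M}"
proof -
  let ?P = "{\<pi>. \<pi> permutes (UNIV :: 'n set)}"
  have fP: "finite ?P" using finite_permutations[of "UNIV :: 'n set"] by simp
  obtain MA DA where A: "symplectic MA" "transpose MA ** A ** MA = diag2 DA"
    and eigs_A: "sympl_eigs A = sorted_entries DA"
    using williamson_normal_form[OF assms(1,3)] by blast
  obtain MB DB where B: "symplectic MB" "transpose MB ** B ** MB = diag2 DB"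
    and eigs_B: "sympl_eigs B = sorted_entries DB"
    using williamson_normal_form[OF assms(2,4)] by blast
  from assms(5) have "majorized (sorted_entries DA) (sorted_entries DB)"
    unfolding eigs_A eigs_B .
  then obtain p where p: "\<forall>\<pi>\<in>?P. 0 \<le> p \<pi>" "sum p ?P = 1"
    "diag2 DA = (\<Sum>\<pi>\<in>?P. p \<pi> *\<^sub>R (transpose (perm_mat \<pi>) ** diag2 DB ** perm_mat \<pi>))"
    using diag2_majorized_convex_combination by blast
  define M where "M \<pi> = MB ** perm_mat \<pi> ** sympl_inv MA" for \<pi>
  have M: "symplectic (M \<pi>)" if "\<pi> \<in> ?P" for \<pi>
    unfolding M_def using that A(1) B(1)
    by (auto intro!: symplectic_mult symplectic_sympl_inv symplectic_perm_mat)
  have "A = transpose (sympl_inv MA) ** diag2 DA ** sympl_inv MA"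
    using congruence_sympl_inv[OF A(1), of A] A(2) by simp
  also have "\<dots> = (\<Sum>\<pi>\<in>?P. p \<pi> *\<^sub>R (transpose (M \<pi>) ** B ** M \<pi>))"
    unfolding p(3) B(2)[symmetric] M_def congruence_sum[OF fP]
    by (simp add: matrix_transpose_mul matrix_mul_assoc)
  finally have A_eq: "A = (\<Sum>\<pi>\<in>?P. p \<pi> *\<^sub>R (transpose (M \<pi>) ** B ** M \<pi>))" .
  moreover have "A \<in> convex hull {transpose M ** B ** M | M. symplectic M}"
    unfolding A_eq using fP p(1,2) M
    by (intro convex_sum convex_convex_hull) (auto intro!: hull_inc)
  ultimately show ?thesis using p(1,2) M by blast
qed

end
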